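(* Let $\alpha\in(0,1)$ and let $\theta_0=\mathbf 1_{D_0}$ be a rotating patch of the generalized SQG equation rotating around a point $x_0$ (i.e. $D_t=\mathbf R_{x_0,\varphi(t)}D_0$). Then $x_0$ is the center of mass $\frac{1}{|D_0|}\int_{D_0}x\,dx$ of $D_0$.
   Context: Generalized SQG: $\partial_t\theta+u\cdot\nabla\theta=0$, $u=-\nabla^\perp(-\Delta)^{-1+\frac\alpha2}\theta$, $(-\Delta)^{-1+\frac\alpha2}\theta(x)=\frac{C_\alpha}{2\pi}\int_{\mathbb R^2}\frac{\theta(y)}{|x-y|^\alpha}dy$. A rotating patch: $D_0$ bounded simply connected with smooth boundary such that the patch solution with datum $\mathbf 1_{D_0}$ is $\mathbf 1_{D_t}$, $D_t=\mathbf R_{x_0,\varphi(t)}D_0$, $\mathbf R_{x_0,\varphi}$ the planar rotation of center $x_0$ and angle $\varphi$, $t\mapsto\varphi(t)$ smooth and non-constant. *)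

theory Defs
  imports "HOL-Analysis.Analysis"
begin

text \<open>The plane R^2 is identified with the complex numbers: (x1,x2) = x1 + i x2.\<close>

definition smooth_fun :: "(real \<Rightarrow> 'a::real_normed_vector) \<Rightarrow> bool" where
  "smooth_fun f \<longleftrightarrow> (\<exists>g. g 0 = f \<and>
      (\<forall>k t. (g k has_vector_derivative g (Suc k) t) (at t)))"

definition smooth_jordan_boundary :: "complex set \<Rightarrow> bool" where
  "smooth_jordan_boundary D \<longleftrightarrow> (\<exists>\<gamma>::real \<Rightarrow> complex.
      smooth_fun \<gamma> \<and> (\<forall>t. \<gamma> (t + 1) = \<gamma> t) \<and>
      (\<forall>t. vector_derivative \<gamma> (at t) \<noteq> 0) \<and>
      inj_on \<gamma> {0..<1} \<and> frontier D = \<gamma> ` {0..1})"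

definition rot :: "complex \<Rightarrow> real \<Rightarrow> complex \<Rightarrow> complex" where
  "rot x0 \<phi> z = x0 + cis \<phi> * (z - x0)"

text \<open>Normalisation constant C_alpha of the kernel of (-Delta)^(-1+alpha/2) in R^2.\<close>
definition C_alpha :: "real \<Rightarrow> real" where
  "C_alpha \<alpha> = Gamma (\<alpha> / 2) / (2 powr (1 - \<alpha>) * Gamma (1 - \<alpha> / 2))"

text \<open>Stream function (-Delta)^(-1+alpha/2) 1_D.\<close>
definition stream :: "real \<Rightarrow> complex set \<Rightarrow> complex \<Rightarrow> real" where
  "stream \<alpha> D x = C_alpha \<alpha> / (2 * pi) * (LINT y:D|lborel. norm (x - y) powr (- \<alpha>))"

definition grad :: "(complex \<Rightarrow> real) \<Rightarrow> complex \<Rightarrow> complex" where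
  "grad f x = complex_of_real (frechet_derivative f (at x) 1)
              + \<i> * complex_of_real (frechet_derivative f (at x) \<i>)"

text \<open>Velocity u = - grad^perp of the stream function, where v^perp = (-v2, v1) = i v.\<close>
definition velocity :: "real \<Rightarrow> complex set \<Rightarrow> complex \<Rightarrow> complex" where
  "velocity \<alpha> D x = - (\<i> * grad (stream \<alpha> D) x)"

definition test_fun :: "(complex \<Rightarrow> real) \<Rightarrow> bool" where
  "test_fun \<psi> \<longleftrightarrow> \<psi> differentiable_on UNIV \<and>
     (\<forall>v. continuous_on UNIV (\<lambda>x. frechet_derivative \<psi> (at x) v)) \<and>
     bounded {x. \<psi> x \<noteq> 0}"

text \<open>theta(t) = 1_{D t}, t \<ge> 0, is a (weak) patch solution of gSQG with datum 1_{D 0}: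
  d/dt \<integral> theta psi = \<integral> theta u . grad psi for every test function psi.\<close>
definition gsqg_patch_solution :: "real \<Rightarrow> (real \<Rightarrow> complex set) \<Rightarrow> complex set \<Rightarrow> bool" where
  "gsqg_patch_solution \<alpha> D D0 \<longleftrightarrow> D 0 = D0 \<and>
     (\<forall>t\<ge>0. D t \<in> sets lborel \<and> bounded (D t) \<and>
        (\<forall>x. stream \<alpha> (D t) differentiable (at x))) \<and>
     (\<forall>\<psi>. test_fun \<psi> \<longrightarrow> (\<forall>t\<ge>0.
        ((\<lambda>s. LINT x:D s|lborel. \<psi> x) has_real_derivative
           (LINT x:D t|lborel. velocity \<alpha> (D t) x \<bullet> grad \<psi> x)) (at t within {0..})))"

definition rotating_patch :: "real \<Rightarrow> complex set \<Rightarrow> complex \<Rightarrow> bool" where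
  "rotating_patch \<alpha> D0 x0 \<longleftrightarrow>
     open D0 \<and> bounded D0 \<and> D0 \<noteq> {} \<and> simply_connected D0 \<and> smooth_jordan_boundary D0 \<and>
     (\<exists>\<phi>::real \<Rightarrow> real. smooth_fun \<phi> \<and> \<phi> 0 = 0 \<and>
        (\<exists>t1\<ge>0. \<exists>t2\<ge>0. \<phi> t1 \<noteq> \<phi> t2) \<and>
        gsqg_patch_solution \<alpha> (\<lambda>t. rot x0 (\<phi> t) ` D0) D0)"

end

theory Submission
  imports Defs
begin

text \<open>
  Test the weak formulation with a function that equals the linear function
  \<open>w \<bullet> x\<close> on a disc containing every \<open>D t\<close>. Its time derivative is \<open>\<integral>\<^sub>D\<^sub>t u \<bullet> w\<close>, the integral over
  \<open>D t\<close> of a directional derivative of the stream function \<open>K * 1\<^sub>D\<^sub>t\<close>, and this vanishes because the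
  gradient of the kernel \<open>K z = |z| powr -\<alpha>\<close> is odd: \<open>\<integral>\<^sub>D \<nabla>(K * 1\<^sub>D) = 0\<close> for every bounded \<open>D\<close>.
  Hence the first moment \<open>\<integral>\<^sub>D\<^sub>t x dx\<close> is conserved. For \<open>D t = rot x0 (\<phi> t) ` D0\<close>, rotation
  invariance of Lebesgue measure gives \<open>\<integral>\<^sub>D\<^sub>t x = |D0| x0 + cis (\<phi> t) (\<integral>\<^sub>D\<^sub>0 x - |D0| x0)\<close>; as
  \<open>\<phi>\<close> is continuous and non-constant, \<open>cis (\<phi> t) \<noteq> 1\<close> for some \<open>t\<close>, so \<open>\<integral>\<^sub>D\<^sub>0 x = |D0| x0\<close>.
\<close>

section \<open>Lebesgue measure on the plane\<close>

lemma emeasure_cball_complex: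
  "0 \<le> r \<Longrightarrow> emeasure lborel (cball (c::complex) r) = ennreal (pi * r\<^sup>2)"
  using emeasure_cball[of r c] by (simp add: unit_ball_vol_def Gamma_numeral)

lemma norm_powr_measurable[measurable]:
  "(\<lambda>z::'a::euclidean_space. norm z powr a) \<in> borel_measurable borel"
  by measurable

lemma ball_measurable[measurable]: "ball (c::'a::euclidean_space) r \<in> sets borel"
  by simp

lemma nn_integral_lborel_translate:
  fixes h :: "'a::euclidean_space"
  assumes [measurable]: "g \<in> borel_measurable borel"
  shows "(\<integral>\<^sup>+z. g (z + h) \<partial>lborel) = integral\<^sup>N lborel g"
proof -
  have "integral\<^sup>N lborel g = integral\<^sup>N (distr lborel borel ((+) h)) g"
    by (simp add: lborel_distr_plus)
  also have "\<dots> = (\<integral>\<^sup>+z. g (z + h) \<partial>lborel)"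
    by (subst nn_integral_distr) (auto simp: add.commute)
  finally show ?thesis ..
qed

lemma nn_integral_lborel_reflect:
  fixes x :: "'a::euclidean_space"
  assumes [measurable]: "g \<in> borel_measurable borel"
  shows "(\<integral>\<^sup>+y. g (x - y) \<partial>lborel) = integral\<^sup>N lborel g"
proof -
  have "lborel = density (distr lborel borel (\<lambda>y. x + (-1::real) *\<^sub>R y)) (\<lambda>_. \<bar>-1::real\<bar>^DIM('a))"
    by (rule lborel_affine) simp
  then have "lborel = distr lborel borel (\<lambda>y::'a. x - y)"
    by (simp add: density_1)
  then have "integral\<^sup>N lborel g = integral\<^sup>N (distr lborel borel (\<lambda>y::'a. x - y)) g"
    by simp
  also have "\<dots> = (\<integral>\<^sup>+y. g (x - y) \<partial>lborel)"
    by (subst nn_integral_distr) auto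
  finally show ?thesis ..
qed

section \<open>Integrability of the kernel \<open>|z| powr -\<beta>\<close> on discs\<close>

definition dyadic_annulus :: "real \<Rightarrow> nat \<Rightarrow> complex set" where
  "dyadic_annulus r k = {z. r / 2 powr real (Suc k) < norm z \<and> norm z \<le> r / 2 powr real k}"

lemma dyadic_annulus_cover:
  assumes "0 < norm z" "norm z \<le> r"
  shows "\<exists>k. z \<in> dyadic_annulus r k"
proof -
  define L where "L = log 2 (r / norm z)"
  have "1 \<le> r / norm z" using assms by simp
  then have L0: "0 \<le> L" by (simp add: L_def)
  define k where "k = nat \<lfloor>L\<rfloor>"
  have "real k \<le> L" and "L < real (Suc k)"
    using L0 by (simp_all add: k_def) linarith
  moreover have "0 < r / norm z" using \<open>1 \<le> r / norm z\<close> by linarith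
  ultimately have "2 powr real k \<le> r / norm z" and "r / norm z < 2 powr real (Suc k)"
    unfolding L_def by (simp_all only: le_log_iff[of 2] log_less_iff[of 2])
  then have "z \<in> dyadic_annulus r k"
    using assms by (simp add: dyadic_annulus_def divide_less_eq le_divide_eq mult.commute)
  then show ?thesis ..
qed

text \<open>On the \<open>k\<close>-th annulus the kernel is at most \<open>(r/2^(k+1)) powr -\<beta>\<close>, and the annulus lies in
  a disc of area \<open>\<pi>(r/2^k)\<^sup>2\<close>; the product decays geometrically with ratio \<open>2 powr (\<beta>-2)\<close>.\<close>
lemma annulus_term:
  fixes r \<beta> :: real and k :: nat
  assumes r: "r > 0"
  shows "(r / 2 powr real (Suc k)) powr (-\<beta>) * (pi * (r / 2 powr real k)\<^sup>2)
       = pi * 2 powr \<beta> * r powr (2 - \<beta>) * (2 powr (\<beta> - 2)) ^ k"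
proof -
  have "(2 powr real k)\<^sup>2 = (2::real) powr (2 * real k)"
    by (subst powr_power) simp_all
  then have "(r / 2 powr real k)\<^sup>2 = r powr 2 / 2 powr (2 * real k)"
    using r by (simp add: power_divide)
  then have sq: "(r / 2 powr real k)\<^sup>2 = r powr 2 * 2 powr (-2 * real k)"
    by (simp add: powr_minus_divide)
  have pw: "(2 powr (\<beta> - 2)) ^ k = (2::real) powr ((\<beta> - 2) * real k)"
    by (simp add: powr_realpow[symmetric] powr_powr)
  have "(r / 2 powr real (Suc k)) powr (-\<beta>) = r powr (-\<beta>) / 2 powr (real (Suc k) * (-\<beta>))"
    using r by (simp only: powr_divide powr_powr powr_ge_zero less_imp_le)
  moreover have "(2::real) powr (real (Suc k) * (-\<beta>)) = inverse (2 powr (\<beta> * real k + \<beta>))"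
    by (subst powr_minus[symmetric]) (simp add: algebra_simps)
  ultimately have l: "(r / 2 powr real (Suc k)) powr (-\<beta>) = r powr (-\<beta>) * 2 powr (\<beta> * real k + \<beta>)"
    by (simp add: divide_inverse)
  have "r powr (-\<beta>) * r powr 2 = r powr (2 - \<beta>)" by (simp add: powr_add[symmetric])
  moreover have "(2::real) powr (\<beta> * real k + \<beta>) * 2 powr (-2 * real k) = 2 powr \<beta> * 2 powr ((\<beta> - 2) * real k)"
    by (simp add: powr_add[symmetric] algebra_simps)
  ultimately show ?thesis
    unfolding sq pw l by (simp add: algebra_simps)
qed

lemma dyadic_annulus_integral_bound:
  fixes \<beta> r :: real
  assumes b0: "0 \<le> \<beta>" and r: "r > 0"
  shows "(\<integral>\<^sup>+z. indicator (dyadic_annulus r k) z * ennreal (norm z powr (-\<beta>)) \<partial>lborel)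
     \<le> ennreal (pi * 2 powr \<beta> * r powr (2 - \<beta>) * (2 powr (\<beta> - 2)) ^ k)"
proof -
  define \<rho> where "\<rho> = r / 2 powr real k"
  define M where "M = (r / 2 powr real (Suc k)) powr (-\<beta>)"
  have "(\<integral>\<^sup>+z. indicator (dyadic_annulus r k) z * ennreal (norm z powr (-\<beta>)) \<partial>lborel)
      \<le> (\<integral>\<^sup>+z. ennreal M * indicator (cball (0::complex) \<rho>) z \<partial>lborel)"
  proof (rule nn_integral_mono)
    fix z :: complex
    show "indicator (dyadic_annulus r k) z * ennreal (norm z powr (-\<beta>)) \<le> ennreal M * indicator (cball 0 \<rho>) z"
    proof (cases "z \<in> dyadic_annulus r k")
      case True
      then have "norm z powr (-\<beta>) \<le> M"
        using r b0 unfolding M_def by (intro powr_mono2') (auto simp: dyadic_annulus_def)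
      then show ?thesis using True by (simp add: \<rho>_def dyadic_annulus_def ennreal_leI)
    qed simp
  qed
  also have "\<dots> = ennreal (M * (pi * \<rho>\<^sup>2))"
    using r by (simp add: M_def \<rho>_def nn_integral_cmult_indicator emeasure_cball_complex ennreal_mult)
  also have "M * (pi * \<rho>\<^sup>2) = pi * 2 powr \<beta> * r powr (2 - \<beta>) * (2 powr (\<beta> - 2)) ^ k"
    unfolding M_def \<rho>_def by (rule annulus_term[OF r])
  finally show ?thesis .
qed

definition disc_const :: "real \<Rightarrow> real" where
  "disc_const \<beta> = pi * 2 powr \<beta> / (1 - 2 powr (\<beta> - 2))"

lemma disc_const_nonneg: "\<beta> < 2 \<Longrightarrow> 0 \<le> disc_const \<beta>"
  unfolding disc_const_def by (intro divide_nonneg_pos) (auto intro: powr_less_one)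

text \<open>Summing the geometric series over the dyadic annuli bounds the kernel integral on a disc.\<close>
lemma disc_powr_integral_bound:
  fixes \<beta> r :: real
  assumes b0: "0 \<le> \<beta>" and b2: "\<beta> < 2" and r: "r > 0"
  shows "(\<integral>\<^sup>+z. ennreal (indicator (ball (0::complex) r) z * norm z powr (-\<beta>)) \<partial>lborel)
     \<le> ennreal (disc_const \<beta> * r powr (2 - \<beta>))"
proof -
  define A where "A = dyadic_annulus r"
  define f where "f z = ennreal (norm z powr (-\<beta>))" for z :: complex
  define c where "c = pi * 2 powr \<beta> * r powr (2 - \<beta>)"
  define q where "q = (2::real) powr (\<beta> - 2)"
  have q0: "0 \<le> q" and q1: "q < 1" unfolding q_def using b2 by (auto intro: powr_less_one)
  have [measurable]: "A k \<in> sets lborel" for k unfolding A_def dyadic_annulus_def by measurable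
  have cover: "ennreal (indicator (ball 0 r) z * norm z powr (-\<beta>)) \<le> (\<Sum>k. indicator (A k) z * f z)" for z
  proof (cases "z \<in> ball 0 r \<and> z \<noteq> 0")
    case True
    then obtain k where "z \<in> A k" using dyadic_annulus_cover[of z r] by (auto simp: A_def)
    then have "ennreal (indicator (ball 0 r) z * norm z powr (-\<beta>)) = (\<Sum>j\<in>{k}. indicator (A j) z * f z)"
      using True by (simp add: f_def)
    also have "\<dots> \<le> (\<Sum>j. indicator (A j) z * f z)" by (intro sum_le_suminf) auto
    finally show ?thesis .
  qed (auto simp: f_def)
  have "(\<integral>\<^sup>+z. ennreal (indicator (ball (0::complex) r) z * norm z powr (-\<beta>)) \<partial>lborel)
        \<le> (\<integral>\<^sup>+z. (\<Sum>k. indicator (A k) z * f z) \<partial>lborel)"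
    by (intro nn_integral_mono cover)
  also have "\<dots> = (\<Sum>k. \<integral>\<^sup>+z. indicator (A k) z * f z \<partial>lborel)"
    by (intro nn_integral_suminf) (simp add: f_def)
  also have "\<dots> \<le> (\<Sum>k. ennreal (c * q^k))"
    unfolding A_def f_def c_def q_def
    by (intro suminf_le dyadic_annulus_integral_bound[OF b0 r]) auto
  also have "\<dots> = ennreal (c / (1 - q))"
    using q0 q1 geometric_sums[of q] sums_mult[of _ _ c]
    by (intro suminf_ennreal_eq) (auto simp: c_def divide_inverse)
  also have "c / (1 - q) = disc_const \<beta> * r powr (2 - \<beta>)"
    by (simp add: c_def q_def disc_const_def)
  finally show ?thesis .
qed

lemma powr_neg_lipschitz:
  fixes a b m \<alpha> :: real
  assumes m: "0 < m" "m \<le> a" "m \<le> b" and al: "0 \<le> \<alpha>"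
  shows "\<bar>a powr (-\<alpha>) - b powr (-\<alpha>)\<bar> \<le> \<alpha> * m powr (-\<alpha>-1) * \<bar>a - b\<bar>"
proof -
  have main: "\<bar>a powr (-\<alpha>) - b powr (-\<alpha>)\<bar> \<le> \<alpha> * m powr (-\<alpha>-1) * \<bar>a - b\<bar>"
    if ab: "a < b" and ma: "m \<le> a" for a b
  proof -
    have "\<And>x. a \<le> x \<Longrightarrow> DERIV (\<lambda>t. t powr (-\<alpha>)) x :> (-\<alpha>) * x powr (-\<alpha> - 1)"
      using m(1) ma by (intro has_real_derivative_powr) auto
    then obtain z where z: "a < z" "z < b"
      and eq: "b powr (-\<alpha>) - a powr (-\<alpha>) = (b - a) * ((-\<alpha>) * z powr (-\<alpha> - 1))"
      using MVT2[OF ab, of "\<lambda>t. t powr (-\<alpha>)" "\<lambda>x. (-\<alpha>) * x powr (-\<alpha> - 1)"] by blast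
    have "a powr (-\<alpha>) - b powr (-\<alpha>) = (b - a) * (\<alpha> * z powr (-\<alpha> - 1))"
      using eq by (simp add: algebra_simps)
    moreover have "0 \<le> (b - a) * (\<alpha> * z powr (-\<alpha> - 1))" using ab al by simp
    ultimately have e: "\<bar>a powr (-\<alpha>) - b powr (-\<alpha>)\<bar> = (b - a) * (\<alpha> * z powr (-\<alpha> - 1))"
      by simp
    have "z powr (-\<alpha>-1) \<le> m powr (-\<alpha>-1)"
      using z m(1) ma al by (intro powr_mono2') auto
    then have "(b - a) * (\<alpha> * z powr (-\<alpha> - 1)) \<le> (b - a) * (\<alpha> * m powr (-\<alpha> - 1))"
      using ab al by (intro mult_left_mono) auto
    then show ?thesis
      using ab unfolding e by (simp add: mult_ac)
  qed
  consider "a < b" | "b < a" | "a = b" by linarith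
  then show ?thesis
    by cases (use main[of a b] main[of b a] m in \<open>auto simp: abs_minus_commute\<close>)
qed

lemma powr_le_linear:
  fixes c \<delta> p :: real
  assumes "0 < \<delta>" "\<delta> \<le> 1" "1 \<le> c" "1 \<le> p" "p \<le> 2"
  shows "(c * \<delta>) powr p \<le> c\<^sup>2 * \<delta>"
proof -
  have "c powr p \<le> c powr 2" using assms by (intro powr_mono) auto
  moreover have "\<delta> powr p \<le> \<delta> powr 1" using assms by (intro powr_mono') auto
  ultimately have "c powr p * \<delta> powr p \<le> c powr 2 * \<delta> powr 1"
    using assms by (intro mult_mono) auto
  then show ?thesis using assms by (simp add: powr_mult)
qed

text \<open>Pointwise bound for the difference of a translated kernel: near the origin (\<open>|z| < 2|h|\<close>)
  both terms are bounded separately, elsewhere the mean value estimate applies.\<close>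
lemma kernel_translate_pointwise:
  fixes \<alpha> R \<delta> :: real and z h :: complex
  assumes a0: "0 < \<alpha>" and d: "\<delta> = norm h" "0 < \<delta>"
  shows "indicator (ball 0 R) z * \<bar>norm (z+h) powr (-\<alpha>) - norm z powr (-\<alpha>)\<bar>
    \<le> indicator (ball 0 (3*\<delta>)) (z+h) * norm (z+h) powr (-\<alpha>) + indicator (ball 0 (2*\<delta>)) z * norm z powr (-\<alpha>)
      + (\<alpha> * \<delta> * 2 powr (\<alpha>+1)) * (indicator (ball 0 R) z * norm z powr (-(\<alpha>+1)))"
    (is "?L \<le> ?near + ?far")
proof (cases "norm z < 2*\<delta>")
  case True
  have "norm (z+h) \<le> norm z + norm h" by (rule norm_triangle_ineq)
  then have "norm (z+h) < 3*\<delta>" using True d by simp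
  moreover have "\<bar>norm (z+h) powr (-\<alpha>) - norm z powr (-\<alpha>)\<bar> \<le> norm (z+h) powr (-\<alpha>) + norm z powr (-\<alpha>)"
    by (simp add: abs_le_iff add_increasing)
  ultimately have "?L \<le> ?near"
    using True by (simp add: indicator_def)
  also have "?near \<le> ?near + ?far" using a0 d by simp
  finally show ?thesis .
next
  case False
  show ?thesis
  proof (cases "z \<in> ball 0 R")
    case True
    define m where "m = norm z / 2"
    have m0: "0 < m" using False d unfolding m_def by linarith
    have "norm z - norm h \<le> norm (z+h)" using norm_diff_ineq[of z h] by simp
    then have m1: "m \<le> norm (z+h)" using False d by (simp add: m_def)
    have "\<bar>norm (z+h) - norm z\<bar> \<le> \<delta>"
      using norm_triangle_ineq3[of "z+h" z] d by simp
    moreover have "m \<le> norm z" using m0 by (simp add: m_def)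
    ultimately have "\<bar>norm (z+h) powr (-\<alpha>) - norm z powr (-\<alpha>)\<bar> \<le> \<alpha> * m powr (-\<alpha>-1) * \<delta>"
      using powr_neg_lipschitz[OF m0 m1, of "norm z" \<alpha>] a0
      by (meson less_imp_le mult_left_mono mult_nonneg_nonneg order_trans powr_ge_zero)
    also have "m powr (-\<alpha>-1) = norm z powr (-(\<alpha>+1)) * 2 powr (\<alpha>+1)"
    proof -
      have "m powr (-\<alpha>-1) = norm z powr (-(\<alpha>+1)) / 2 powr (-(\<alpha>+1))"
        unfolding m_def by (simp only: powr_divide norm_ge_zero zero_le_numeral minus_diff_eq) simp
      then show ?thesis by (simp only: powr_minus divide_inverse inverse_inverse_eq)
    qed
    finally have "?L \<le> ?far" using True by (simp add: mult_ac)
    then show ?thesis by (simp add: add_increasing)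
  qed (use a0 d in simp)
qed

text \<open>Integrating the pointwise bound: the two singular pieces are kernel integrals over small
  discs, the regular piece is \<open>|h|\<close> times the integral of the more singular kernel \<open>|z| powr -(\<alpha>+1)\<close>.\<close>
lemma kernel_translate_integral_split:
  fixes \<alpha> R :: real and h :: complex
  assumes a0: "0 < \<alpha>" and a1: "\<alpha> < 1" and R: "R > 0" and h: "0 < norm h"
  shows "(\<integral>\<^sup>+z. ennreal (indicator (ball 0 R) z * \<bar>norm (z+h) powr (-\<alpha>) - norm z powr (-\<alpha>)\<bar>) \<partial>lborel)
       \<le> ennreal (disc_const \<alpha> * (3 * norm h) powr (2 - \<alpha>) + disc_const \<alpha> * (2 * norm h) powr (2 - \<alpha>)
                 + (\<alpha> * norm h * 2 powr (\<alpha>+1)) * (disc_const (\<alpha>+1) * R powr (1 - \<alpha>)))"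
proof -
  define \<delta> where "\<delta> = norm h"
  define c where "c = \<alpha> * \<delta> * 2 powr (\<alpha>+1)"
  define g where "g \<rho> \<beta> z = indicator (ball 0 \<rho>) z * norm z powr (-\<beta>)" for \<rho> \<beta> and z :: complex
  have g0: "0 \<le> g \<rho> \<beta> z" for \<rho> \<beta> z by (simp add: g_def)
  have g_bound: "(\<integral>\<^sup>+z. ennreal (g \<rho> \<beta> z) \<partial>lborel) \<le> ennreal (disc_const \<beta> * \<rho> powr (2 - \<beta>))"
    if "0 \<le> \<beta>" "\<beta> < 2" "0 < \<rho>" for \<rho> \<beta>
    unfolding g_def by (rule disc_powr_integral_bound[OF that])
  have [measurable]: "g \<rho> \<beta> \<in> borel_measurable borel" for \<rho> \<beta>
    unfolding g_def by measurable
  have "(\<integral>\<^sup>+z. ennreal (indicator (ball 0 R) z * \<bar>norm (z+h) powr (-\<alpha>) - norm z powr (-\<alpha>)\<bar>) \<partial>lborel)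
      \<le> (\<integral>\<^sup>+z. (ennreal (g (3*\<delta>) \<alpha> (z+h)) + ennreal (g (2*\<delta>) \<alpha> z)) + ennreal c * ennreal (g R (\<alpha>+1) z) \<partial>lborel)"
  proof (rule nn_integral_mono)
    fix z :: complex
    have "0 \<le> c" using a0 by (simp add: c_def \<delta>_def)
    then show "ennreal (indicator (ball 0 R) z * \<bar>norm (z+h) powr (-\<alpha>) - norm z powr (-\<alpha>)\<bar>)
      \<le> (ennreal (g (3*\<delta>) \<alpha> (z+h)) + ennreal (g (2*\<delta>) \<alpha> z)) + ennreal c * ennreal (g R (\<alpha>+1) z)"
      using kernel_translate_pointwise[OF a0 \<delta>_def, of R z] h g0
      by (simp add: g_def c_def \<delta>_def ennreal_plus[symmetric] ennreal_mult[symmetric] del: ennreal_plus)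
  qed
  also have "\<dots> = ((\<integral>\<^sup>+z. ennreal (g (3*\<delta>) \<alpha> (z+h)) \<partial>lborel) + (\<integral>\<^sup>+z. ennreal (g (2*\<delta>) \<alpha> z) \<partial>lborel))
      + ennreal c * (\<integral>\<^sup>+z. ennreal (g R (\<alpha>+1) z) \<partial>lborel)"
    by (simp add: nn_integral_add nn_integral_cmult)
  also have "(\<integral>\<^sup>+z. ennreal (g (3*\<delta>) \<alpha> (z+h)) \<partial>lborel) = (\<integral>\<^sup>+z. ennreal (g (3*\<delta>) \<alpha> z) \<partial>lborel)"
    by (rule nn_integral_lborel_translate) measurable
  also have "(\<integral>\<^sup>+z. ennreal (g (3*\<delta>) \<alpha> z) \<partial>lborel) + (\<integral>\<^sup>+z. ennreal (g (2*\<delta>) \<alpha> z) \<partial>lborel)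
      + ennreal c * (\<integral>\<^sup>+z. ennreal (g R (\<alpha>+1) z) \<partial>lborel)
      \<le> ennreal (disc_const \<alpha> * (3*\<delta>) powr (2 - \<alpha>)) + ennreal (disc_const \<alpha> * (2*\<delta>) powr (2 - \<alpha>))
      + ennreal c * ennreal (disc_const (\<alpha>+1) * R powr (2 - (\<alpha>+1)))"
    using a0 a1 h R by (intro add_mono mult_left_mono g_bound) (auto simp: \<delta>_def)
  also have "\<dots> = ennreal (disc_const \<alpha> * (3 * norm h) powr (2 - \<alpha>) + disc_const \<alpha> * (2 * norm h) powr (2 - \<alpha>)
                 + (\<alpha> * norm h * 2 powr (\<alpha>+1)) * (disc_const (\<alpha>+1) * R powr (1 - \<alpha>)))"
    using a0 a1 by (simp add: c_def \<delta>_def disc_const_nonneg ennreal_mult)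
  finally show ?thesis .
qed

lemma kernel_translate_integral_bound:
  fixes \<alpha> R :: real
  assumes a0: "0 < \<alpha>" and a1: "\<alpha> < 1" and R: "R > 0"
  shows "\<exists>C\<ge>0. \<forall>h::complex. norm h \<le> 1 \<longrightarrow>
     (\<integral>\<^sup>+z. ennreal (indicator (ball 0 R) z * \<bar>norm (z+h) powr (-\<alpha>) - norm z powr (-\<alpha>)\<bar>) \<partial>lborel)
       \<le> ennreal (C * norm h)"
proof (intro exI conjI allI impI)
  define B where "B = disc_const (\<alpha>+1) * R powr (1 - \<alpha>)"
  have B0: "0 \<le> disc_const \<alpha>" "0 \<le> B"
    using a1 by (auto simp: B_def intro!: disc_const_nonneg mult_nonneg_nonneg)
  show "0 \<le> 13 * disc_const \<alpha> + 4 * B" using B0 by simp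
  fix h :: complex assume h1: "norm h \<le> 1"
  show "(\<integral>\<^sup>+z. ennreal (indicator (ball 0 R) z * \<bar>norm (z+h) powr (-\<alpha>) - norm z powr (-\<alpha>)\<bar>) \<partial>lborel)
      \<le> ennreal ((13 * disc_const \<alpha> + 4 * B) * norm h)"
  proof (cases "h = 0")
    case False
    define \<delta> where "\<delta> = norm h"
    have d0: "0 < \<delta>" using False by (simp add: \<delta>_def)
    have "(2::real) powr (\<alpha>+1) \<le> 2 powr 2" using a1 by (intro powr_mono) auto
    then have "\<alpha> * 2 powr (\<alpha>+1) \<le> 1 * 4" using a0 a1 by (intro mult_mono) auto
    then have c: "\<alpha> * \<delta> * 2 powr (\<alpha>+1) \<le> 4 * \<delta>"
      using d0 mult_right_mono[of "\<alpha> * 2 powr (\<alpha>+1)" 4 \<delta>] by (simp add: mult_ac)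
    have "(3*\<delta>) powr (2 - \<alpha>) \<le> 3\<^sup>2 * \<delta>" "(2*\<delta>) powr (2 - \<alpha>) \<le> 2\<^sup>2 * \<delta>"
      by (rule powr_le_linear; use d0 h1 a0 a1 in \<open>simp add: \<delta>_def\<close>)+
    then have "disc_const \<alpha> * (3*\<delta>) powr (2 - \<alpha>) + disc_const \<alpha> * (2*\<delta>) powr (2 - \<alpha>)
        + (\<alpha> * \<delta> * 2 powr (\<alpha>+1)) * B \<le> disc_const \<alpha> * (9*\<delta>) + disc_const \<alpha> * (4*\<delta>) + (4*\<delta>) * B"
      using B0 c by (intro add_mono mult_left_mono mult_right_mono) auto
    also have "\<dots> = (13 * disc_const \<alpha> + 4 * B) * norm h" by (simp add: \<delta>_def algebra_simps)
    finally have "ennreal (disc_const \<alpha> * (3*\<delta>) powr (2 - \<alpha>) + disc_const \<alpha> * (2*\<delta>) powr (2 - \<alpha>)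
        + (\<alpha> * \<delta> * 2 powr (\<alpha>+1)) * B) \<le> ennreal ((13 * disc_const \<alpha> + 4 * B) * norm h)"
      by (rule ennreal_leI)
    with kernel_translate_integral_split[OF a0 a1 R, of h] d0 show ?thesis
      unfolding B_def \<delta>_def by (blast intro: order_trans)
  qed simp
qed
section \<open>Symmetric difference quotients and integrals of derivatives\<close>

lemma directional_difference_quotient:
  fixes f :: "'a::real_normed_vector \<Rightarrow> real"
  assumes "(f has_derivative f') (at x)"
  shows "((\<lambda>t::real. (f (x + t *\<^sub>R v) - f x) / t) \<longlongrightarrow> f' v) (at 0)"
proof -
  have "((\<lambda>t::real. x + t *\<^sub>R v) has_derivative (\<lambda>t. t *\<^sub>R v)) (at 0)"
    by (auto intro!: derivative_eq_intros)
  from has_derivative_compose[OF this] assms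
  have "((\<lambda>t. f (x + t *\<^sub>R v)) has_derivative (\<lambda>t. f' (t *\<^sub>R v))) (at 0)"
    by (simp add: o_def)
  moreover have "(\<lambda>t. f' (t *\<^sub>R v)) = (*) (f' v)"
    using linear_scale[OF has_derivative_linear[OF assms]] by (auto simp: mult.commute)
  ultimately have "((\<lambda>t. f (x + t *\<^sub>R v)) has_field_derivative f' v) (at 0)"
    unfolding has_field_derivative_def by simp
  from DERIV_D[OF this] show ?thesis by simp
qed

lemma symmetric_difference_quotient:
  fixes f :: "'a::real_normed_vector \<Rightarrow> real"
  assumes d: "(f has_derivative f') (at x)" and e: "e \<longlonglongrightarrow> 0" and e0: "\<And>n. e n \<noteq> 0"
  shows "(\<lambda>n. (f (x + e n *\<^sub>R v) - f (x - e n *\<^sub>R v)) / (2 * e n)) \<longlonglongrightarrow> f' v"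
proof -
  have "filterlim e (at 0) sequentially" "filterlim (\<lambda>n. - e n) (at 0) sequentially"
    using e e0 tendsto_minus[OF e] by (auto intro!: filterlim_atI)
  from this[THEN filterlim_compose[OF directional_difference_quotient[OF d, of v]]]
  have "(\<lambda>n. (f (x + e n *\<^sub>R v) - f x) / e n) \<longlonglongrightarrow> f' v"
       "(\<lambda>n. (f (x - e n *\<^sub>R v) - f x) / (- e n)) \<longlonglongrightarrow> f' v"
    by (simp_all add: o_def)
  from tendsto_divide[OF tendsto_add[OF this] tendsto_const[of 2]]
  have "(\<lambda>n. ((f (x + e n *\<^sub>R v) - f x) / e n + (f (x - e n *\<^sub>R v) - f x) / (- e n)) / 2) \<longlonglongrightarrow> f' v"
    by simp
  moreover have "(\<lambda>n. ((f (x + e n *\<^sub>R v) - f x) / e n + (f (x - e n *\<^sub>R v) - f x) / (- e n)) / 2)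
      = (\<lambda>n. (f (x + e n *\<^sub>R v) - f (x - e n *\<^sub>R v)) / (2 * e n))"
    using e0 by (intro ext) (simp add: divide_simps)
  ultimately show ?thesis by (simp only:)
qed

lemma small_steps_to_zero:
  fixes v :: "'a::real_normed_vector"
  shows "\<exists>e::nat \<Rightarrow> real. (\<forall>n. e n > 0) \<and> (\<forall>n. norm (e n *\<^sub>R v) \<le> 1) \<and> e \<longlonglongrightarrow> 0"
proof (intro exI conjI allI)
  define e where "e n = 1 / ((real n + 1) * (norm v + 1))" for n
  show e0: "e n > 0" for n
    unfolding e_def using norm_ge_zero[of v] by (intro divide_pos_pos mult_pos_pos) linarith+
  show "norm (e n *\<^sub>R v) \<le> 1" for n
  proof -
    have "norm v \<le> (real n + 1) * (norm v + 1)"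
      using mult_right_mono[of 1 "real n + 1" "norm v + 1"] by simp
    then show ?thesis
      using e0[of n] by (simp add: e_def divide_le_eq_1)
  qed
  have "(\<lambda>n. 1 / (real n + 1)) \<longlonglongrightarrow> 0"
    using LIMSEQ_inverse_real_of_nat by (simp add: inverse_eq_divide add.commute)
  then have "(\<lambda>n. 1 / (real n + 1) * (1 / (norm v + 1))) \<longlonglongrightarrow> 0 * (1 / (norm v + 1))"
    by (intro tendsto_mult tendsto_const)
  then show "e \<longlonglongrightarrow> 0" unfolding e_def by simp
qed

lemma symmetric_quotient_lipschitz_bound:
  fixes f :: "'a::real_normed_vector \<Rightarrow> real"
  assumes lip: "\<And>h. norm h \<le> 1 \<Longrightarrow> \<bar>f (x + h) - f x\<bar> \<le> L * norm h"
    and t: "t > 0" "norm (t *\<^sub>R v) \<le> 1"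
  shows "\<bar>(f (x + t *\<^sub>R v) - f (x - t *\<^sub>R v)) / (2 * t)\<bar> \<le> L * norm v"
proof -
  have "\<bar>f (x + t *\<^sub>R v) - f x\<bar> \<le> L * norm (t *\<^sub>R v)"
    "\<bar>f (x + - (t *\<^sub>R v)) - f x\<bar> \<le> L * norm (t *\<^sub>R v)"
    using lip[OF t(2)] lip[of "- (t *\<^sub>R v)"] t(2) by auto
  then have "\<bar>f (x + t *\<^sub>R v) - f (x - t *\<^sub>R v)\<bar> \<le> (2 * t) * (L * norm v)"
    using t(1) by (simp add: algebra_simps)
  then show ?thesis
    using t(1) by (simp add: divide_le_eq mult.commute)
qed

text \<open>If a Lipschitz function has the same integral over \<open>D\<close> when translated by \<open>h\<close> and by
  \<open>-h\<close>, then all its directional derivatives have integral zero over \<open>D\<close>: the symmetric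
  difference quotients have integral zero and converge dominatedly to the derivative.\<close>
lemma set_integral_derivative_zero:
  fixes f :: "'a::euclidean_space \<Rightarrow> real" and D :: "'a set"
  assumes D[measurable]: "D \<in> sets lborel" and finD: "emeasure lborel D < \<infinity>"
    and der: "\<And>x. (f has_derivative f' x) (at x)"
    and lip: "\<And>x h. x \<in> D \<Longrightarrow> norm h \<le> 1 \<Longrightarrow> \<bar>f (x + h) - f x\<bar> \<le> L * norm h"
    and int: "\<And>h. norm h \<le> 1 \<Longrightarrow> set_integrable lborel D (\<lambda>x. f (x + h))"
    and symm: "\<And>h. norm h \<le> 1 \<Longrightarrow> (LINT x:D|lborel. f (x + h)) = (LINT x:D|lborel. f (x - h))"
  shows "(LINT x:D|lborel. f' x v) = 0"
proof -
  have "continuous_on UNIV f"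
    using der by (intro continuous_at_imp_continuous_on ballI has_derivative_continuous) auto
  then have [measurable]: "f \<in> borel_measurable borel" by (rule borel_measurable_continuous_onI)
  obtain e :: "nat \<Rightarrow> real" where e0: "\<And>n. e n > 0" and e1: "\<And>n. norm (e n *\<^sub>R v) \<le> 1"
    and elim: "e \<longlonglongrightarrow> 0"
    using small_steps_to_zero[of v] by blast
  define q where "q n x = (f (x + e n *\<^sub>R v) - f (x - e n *\<^sub>R v)) / (2 * e n)" for n x
  have q_integral: "(LINT x:D|lborel. q n x) = 0" for n
  proof -
    have I: "set_integrable lborel D (\<lambda>x. f (x + e n *\<^sub>R v))"
      "set_integrable lborel D (\<lambda>x. f (x - e n *\<^sub>R v))"
      using int[OF e1[of n]] int[of "- (e n *\<^sub>R v)"] e1[of n] by simp_all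
    have "(LINT x:D|lborel. q n x) = (LINT x:D|lborel. f (x + e n *\<^sub>R v) - f (x - e n *\<^sub>R v)) / (2 * e n)"
      unfolding q_def by (rule set_integral_divide_zero)
    also have "\<dots> = ((LINT x:D|lborel. f (x + e n *\<^sub>R v)) - (LINT x:D|lborel. f (x - e n *\<^sub>R v))) / (2 * e n)"
      by (simp only: set_integral_diff(2)[OF I])
    also have "\<dots> = 0" using symm[OF e1] by simp
    finally show ?thesis .
  qed
  have q_bound: "\<bar>q n x\<bar> \<le> L * norm v" if "x \<in> D" for n x
    unfolding q_def using lip[OF that] e0 e1 by (rule symmetric_quotient_lipschitz_bound)
  have q_lim: "(\<lambda>n. q n x) \<longlonglongrightarrow> f' x v" for x
    unfolding q_def using e0 by (intro symmetric_difference_quotient[OF der elim]) (simp add: less_imp_neq[symmetric])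
  have "(\<lambda>n. LINT x|lborel. indicator D x *\<^sub>R q n x) \<longlonglongrightarrow> (LINT x|lborel. indicator D x *\<^sub>R f' x v)"
  proof (rule integral_dominated_convergence[where w = "\<lambda>x. indicator D x * (L * norm v)"])
    have "(\<lambda>x. f' x v) \<in> borel_measurable borel"
      by (rule borel_measurable_LIMSEQ_real[OF q_lim]) (simp add: q_def)
    then show "(\<lambda>x. indicator D x *\<^sub>R f' x v) \<in> borel_measurable lborel" by measurable
    show "(\<lambda>x. indicator D x *\<^sub>R q n x) \<in> borel_measurable lborel" for n
      unfolding q_def by measurable
    show "integrable lborel (\<lambda>x. indicator D x * (L * norm v))"
      using finD D by (intro integrable_mult_left integrable_real_indicator) auto
    show "AE x in lborel. (\<lambda>n. indicator D x *\<^sub>R q n x) \<longlonglongrightarrow> indicator D x *\<^sub>R f' x v"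
      by (intro AE_I2 tendsto_scaleR tendsto_const q_lim)
    show "AE x in lborel. norm (indicator D x *\<^sub>R q n x) \<le> indicator D x * (L * norm v)" for n
      using q_bound by (intro AE_I2) (simp add: indicator_def)
  qed
  moreover have "(\<lambda>n. LINT x|lborel. indicator D x *\<^sub>R q n x) = (\<lambda>n. 0)"
    using q_integral unfolding set_lebesgue_integral_def by simp
  ultimately show ?thesis
    unfolding set_lebesgue_integral_def using LIMSEQ_unique tendsto_const by metis
qed

section \<open>The Riesz potential of a bounded set\<close>

definition potential :: "real \<Rightarrow> complex set \<Rightarrow> complex \<Rightarrow> real" where
  "potential \<beta> D x = (LINT y:D|lborel. norm (x - y) powr (-\<beta>))"

lemma stream_eq_potential: "stream \<alpha> D x = C_alpha \<alpha> / (2 * pi) * potential \<alpha> D x"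
  by (simp add: stream_def potential_def)

lemma potential_nonneg: "0 \<le> potential \<beta> D x"
  unfolding potential_def set_lebesgue_integral_def
  by (intro Bochner_Integration.integral_nonneg) (simp add: indicator_def)

lemma kernel_nn_integral_bound:
  fixes D :: "complex set"
  assumes [measurable]: "D \<in> sets lborel" and b: "0 \<le> \<beta>" "\<beta> < 2"
    and R: "R > 0" and DR: "\<And>y. y \<in> D \<Longrightarrow> norm (x - y) < R"
  shows "(\<integral>\<^sup>+y. ennreal (indicator D y * norm (x - y) powr (-\<beta>)) \<partial>lborel)
      \<le> ennreal (disc_const \<beta> * R powr (2 - \<beta>))"
proof -
  have "(\<integral>\<^sup>+y. ennreal (indicator D y * norm (x - y) powr (-\<beta>)) \<partial>lborel)
      \<le> (\<integral>\<^sup>+y. ennreal (indicator (ball 0 R) (x - y) * norm (x - y) powr (-\<beta>)) \<partial>lborel)"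
    by (intro nn_integral_mono) (auto simp: indicator_def DR)
  also have "\<dots> = (\<integral>\<^sup>+z. ennreal (indicator (ball (0::complex) R) z * norm z powr (-\<beta>)) \<partial>lborel)"
    by (rule nn_integral_lborel_reflect[where g = "\<lambda>z::complex. ennreal (indicator (ball 0 R) z * norm z powr (-\<beta>))"])
      measurable
  also have "\<dots> \<le> ennreal (disc_const \<beta> * R powr (2 - \<beta>))"
    by (rule disc_powr_integral_bound[OF b R])
  finally show ?thesis .
qed

lemma kernel_set_integrable:
  fixes D :: "complex set"
  assumes [measurable]: "D \<in> sets lborel" and b: "0 \<le> \<beta>" "\<beta> < 2"
    and R: "R > 0" and DR: "\<And>y. y \<in> D \<Longrightarrow> norm (x - y) < R"
  shows "set_integrable lborel D (\<lambda>y. norm (x - y) powr (-\<beta>))"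
  unfolding set_integrable_def
proof (rule integrableI_bounded)
  show "(\<lambda>y. indicator D y *\<^sub>R norm (x - y) powr (-\<beta>)) \<in> borel_measurable lborel" by measurable
  have "(\<integral>\<^sup>+y. ennreal (norm (indicator D y *\<^sub>R norm (x - y) powr (-\<beta>))) \<partial>lborel)
      = (\<integral>\<^sup>+y. ennreal (indicator D y * norm (x - y) powr (-\<beta>)) \<partial>lborel)"
    by (intro nn_integral_cong) (simp add: indicator_def)
  also have "\<dots> < \<infinity>"
    using kernel_nn_integral_bound[OF assms] by (simp add: order_le_less_trans)
  finally show "(\<integral>\<^sup>+y. ennreal (norm (indicator D y *\<^sub>R norm (x - y) powr (-\<beta>))) \<partial>lborel) < \<infinity>" .
qed

lemma potential_bound:
  fixes D :: "complex set"
  assumes [measurable]: "D \<in> sets lborel" and b: "0 \<le> \<beta>" "\<beta> < 2"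
    and R: "R > 0" and DR: "\<And>y. y \<in> D \<Longrightarrow> norm (x - y) < R"
  shows "ennreal (potential \<beta> D x) = (\<integral>\<^sup>+y. ennreal (indicator D y * norm (x - y) powr (-\<beta>)) \<partial>lborel)"
    and "potential \<beta> D x \<le> disc_const \<beta> * R powr (2 - \<beta>)"
proof -
  show nn: "ennreal (potential \<beta> D x) = (\<integral>\<^sup>+y. ennreal (indicator D y * norm (x - y) powr (-\<beta>)) \<partial>lborel)"
    using kernel_set_integrable[OF assms] unfolding potential_def set_lebesgue_integral_def set_integrable_def
    by (subst nn_integral_eq_integral) (auto simp: mult.commute)
  have "0 \<le> disc_const \<beta> * R powr (2 - \<beta>)" using b disc_const_nonneg[of \<beta>] by simp
  moreover have "ennreal (potential \<beta> D x) \<le> ennreal (disc_const \<beta> * R powr (2 - \<beta>))"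
    using kernel_nn_integral_bound[OF assms] by (simp add: nn)
  ultimately show "potential \<beta> D x \<le> disc_const \<beta> * R powr (2 - \<beta>)"
    using potential_nonneg by simp
qed

lemma potential_measurable[measurable]:
  assumes [measurable]: "D \<in> sets lborel"
  shows "potential \<beta> D \<in> borel_measurable borel"
proof -
  have "(\<lambda>x. LINT y|lborel. indicator D y *\<^sub>R norm (x - y) powr (-\<beta>)) \<in> borel_measurable lborel"
    by measurable
  then show ?thesis unfolding potential_def set_lebesgue_integral_def by simp
qed

lemma potential_difference_bound:
  fixes D :: "complex set"
  assumes D[measurable]: "D \<in> sets lborel" and a: "0 \<le> \<alpha>" "\<alpha> < 2" and R: "R > 0"
    and near: "\<And>y. y \<in> D \<Longrightarrow> norm (x - y) < R" "\<And>y. y \<in> D \<Longrightarrow> norm (x + h - y) < R"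
  shows "ennreal \<bar>potential \<alpha> D (x + h) - potential \<alpha> D x\<bar>
    \<le> (\<integral>\<^sup>+z. ennreal (indicator (ball 0 R) z * \<bar>norm (z + h) powr (-\<alpha>) - norm z powr (-\<alpha>)\<bar>) \<partial>lborel)"
proof -
  have I: "set_integrable lborel D (\<lambda>y. norm (x + h - y) powr (-\<alpha>))"
      "set_integrable lborel D (\<lambda>y. norm (x - y) powr (-\<alpha>))"
    using a R near by (auto intro!: kernel_set_integrable[OF D, where R=R])
  define f where "f y = indicator D y * \<bar>norm (x + h - y) powr (-\<alpha>) - norm (x - y) powr (-\<alpha>)\<bar>" for y
  have "integrable lborel (\<lambda>y. norm (indicator D y *\<^sub>R (norm (x + h - y) powr (-\<alpha>) - norm (x - y) powr (-\<alpha>))))"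
    using set_integral_diff(1)[OF I] unfolding set_integrable_def by (rule integrable_norm)
  then have If: "integrable lborel f" unfolding f_def by (simp add: abs_mult)
  have "\<bar>potential \<alpha> D (x + h) - potential \<alpha> D x\<bar>
      = \<bar>LINT y:D|lborel. norm (x + h - y) powr (-\<alpha>) - norm (x - y) powr (-\<alpha>)\<bar>"
    unfolding potential_def using set_integral_diff(2)[OF I] by simp
  also have "\<dots> \<le> integral\<^sup>L lborel f"
    unfolding set_lebesgue_integral_def f_def
    using integral_norm_bound[of lborel "\<lambda>y. indicator D y *\<^sub>R (norm (x + h - y) powr (-\<alpha>) - norm (x - y) powr (-\<alpha>))"]
    by (simp add: abs_mult)
  finally have "ennreal \<bar>potential \<alpha> D (x + h) - potential \<alpha> D x\<bar> \<le> (\<integral>\<^sup>+y. ennreal (f y) \<partial>lborel)"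
    using If by (subst nn_integral_eq_integral) (auto simp: f_def ennreal_leI)
  also have "\<dots> \<le> (\<integral>\<^sup>+y. ennreal (indicator (ball 0 R) (x - y) * \<bar>norm ((x - y) + h) powr (-\<alpha>) - norm (x - y) powr (-\<alpha>)\<bar>) \<partial>lborel)"
    using near by (intro nn_integral_mono) (auto simp: f_def indicator_def algebra_simps)
  also have "\<dots> = (\<integral>\<^sup>+z. ennreal (indicator (ball 0 R) z * \<bar>norm (z + h) powr (-\<alpha>) - norm z powr (-\<alpha>)\<bar>) \<partial>lborel)"
    by (rule nn_integral_lborel_reflect[where
          g = "\<lambda>z::complex. ennreal (indicator (ball 0 R) z * \<bar>norm (z + h) powr (-\<alpha>) - norm z powr (-\<alpha>)\<bar>)"])
      measurable
  finally show ?thesis .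
qed

lemma potential_lipschitz:
  fixes \<alpha> M :: real and D :: "complex set"
  assumes a0: "0 < \<alpha>" and a1: "\<alpha> < 1" and D[measurable]: "D \<in> sets lborel"
    and M: "M \<ge> 1" and DM: "D \<subseteq> ball 0 M"
  shows "\<exists>L. \<forall>x h. x \<in> ball 0 M \<longrightarrow> norm h \<le> 1 \<longrightarrow>
           \<bar>potential \<alpha> D (x + h) - potential \<alpha> D x\<bar> \<le> L * norm h"
proof -
  obtain C where C0: "C \<ge> 0" and C: "\<And>h::complex. norm h \<le> 1 \<Longrightarrow>
     (\<integral>\<^sup>+z. ennreal (indicator (ball 0 (3*M)) z * \<bar>norm (z+h) powr (-\<alpha>) - norm z powr (-\<alpha>)\<bar>) \<partial>lborel)
       \<le> ennreal (C * norm h)"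
    using kernel_translate_integral_bound[OF a0 a1, of "3*M"] M by auto
  have "\<bar>potential \<alpha> D (x + h) - potential \<alpha> D x\<bar> \<le> C * norm h"
    if x: "x \<in> ball 0 M" and h: "norm h \<le> 1" for x h
  proof -
    have near: "norm (z - y) < 3*M" if "y \<in> D" "norm z < 2*M" for y z
      using that DM norm_triangle_ineq4[of z y] by auto
    have "norm (x + h) < 2 * M" "norm x < 2 * M"
      using x h M norm_triangle_ineq[of x h] by auto
    then have "ennreal \<bar>potential \<alpha> D (x + h) - potential \<alpha> D x\<bar> \<le> ennreal (C * norm h)"
      using a0 a1 M near C[OF h] by (intro potential_difference_bound[OF D, THEN order_trans]) auto
    then show ?thesis using C0 by simp
  qed
  then show ?thesis by blast
qed
text \<open>Fubini and the evenness of the kernel: shifting the first variable by \<open>h\<close> or by \<open>-h\<close>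
  gives the same double integral over \<open>D \<times> D\<close>.\<close>
lemma double_integral_shift_symmetric:
  fixes D :: "'a::euclidean_space set" and k :: "'a \<Rightarrow> real"
  assumes [measurable]: "D \<in> sets borel" "k \<in> borel_measurable borel" and even: "\<And>z. k (- z) = k z"
  shows "(\<integral>\<^sup>+x. \<integral>\<^sup>+y. ennreal (indicator D x * indicator D y * k (x + h - y)) \<partial>lborel \<partial>lborel)
       = (\<integral>\<^sup>+x. \<integral>\<^sup>+y. ennreal (indicator D x * indicator D y * k (x - h - y)) \<partial>lborel \<partial>lborel)"
proof -
  have "(\<integral>\<^sup>+x. \<integral>\<^sup>+y. ennreal (indicator D x * indicator D y * k (x + h - y)) \<partial>lborel \<partial>lborel)
      = (\<integral>\<^sup>+y. \<integral>\<^sup>+x. ennreal (indicator D x * indicator D y * k (x + h - y)) \<partial>lborel \<partial>lborel)"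
    by (rule lborel_pair.Fubini'[symmetric]) measurable
  also have "\<dots> = (\<integral>\<^sup>+x. \<integral>\<^sup>+y. ennreal (indicator D x * indicator D y * k (x - h - y)) \<partial>lborel \<partial>lborel)"
    using even[of "x - h - y" for x y] by (simp add: algebra_simps)
  finally show ?thesis .
qed

lemma potential_translate_integral:
  fixes \<alpha> M :: real and D :: "complex set"
  assumes a: "0 \<le> \<alpha>" "\<alpha> < 2" and D[measurable]: "D \<in> sets lborel"
    and M0: "0 < M" and DM: "D \<subseteq> ball 0 M" and h: "norm h \<le> M"
  shows "set_integrable lborel D (\<lambda>x. potential \<alpha> D (x + h))"
    and "ennreal (LINT x:D|lborel. potential \<alpha> D (x + h)) =
     (\<integral>\<^sup>+x. \<integral>\<^sup>+y. ennreal (indicator D x * indicator D y * norm (x + h - y) powr (-\<alpha>)) \<partial>lborel \<partial>lborel)"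
proof -
  have near: "norm (x + h - y) < 3 * M" if "x \<in> D" "y \<in> D" for x y
  proof -
    have "norm x < M" "norm y < M" using that DM by auto
    then show ?thesis using h norm_triangle_ineq4[of "x + h" y] norm_triangle_ineq[of x h] by linarith
  qed
  note pot = potential_bound[OF D a, of "3 * M" "x + h" for x]
  have "emeasure lborel D < \<infinity>"
    using DM by (intro emeasure_bounded_finite) (auto intro: bounded_subset)
  then show int: "set_integrable lborel D (\<lambda>x. potential \<alpha> D (x + h))"
    unfolding set_integrable_def using D M0 near pot(2) potential_nonneg
    by (intro integrableI_bounded_set_indicator[where B = "disc_const \<alpha> * (3 * M) powr (2 - \<alpha>)"]) auto
  have "ennreal (LINT x:D|lborel. potential \<alpha> D (x + h)) = (\<integral>\<^sup>+x. ennreal (indicator D x * potential \<alpha> D (x + h)) \<partial>lborel)"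
    using int potential_nonneg unfolding set_lebesgue_integral_def set_integrable_def
    by (subst nn_integral_eq_integral) (auto simp: indicator_def intro!: nn_integral_cong)
  also have "\<dots> = (\<integral>\<^sup>+x. \<integral>\<^sup>+y. ennreal (indicator D x * indicator D y * norm (x + h - y) powr (-\<alpha>)) \<partial>lborel \<partial>lborel)"
    using M0 near pot(1) by (intro nn_integral_cong) (simp add: indicator_def)
  finally show "ennreal (LINT x:D|lborel. potential \<alpha> D (x + h)) =
     (\<integral>\<^sup>+x. \<integral>\<^sup>+y. ennreal (indicator D x * indicator D y * norm (x + h - y) powr (-\<alpha>)) \<partial>lborel \<partial>lborel)" .
qed

lemma potential_translate_symmetric:
  fixes \<alpha> M :: real and D :: "complex set"
  assumes a: "0 \<le> \<alpha>" "\<alpha> < 2" and D[measurable]: "D \<in> sets lborel"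
    and M0: "0 < M" and DM: "D \<subseteq> ball 0 M" and h: "norm h \<le> M"
  shows "(LINT x:D|lborel. potential \<alpha> D (x + h)) = (LINT x:D|lborel. potential \<alpha> D (x - h))"
proof -
  have h': "norm (- h) \<le> M" using h by simp
  have "ennreal (LINT x:D|lborel. potential \<alpha> D (x + h)) = ennreal (LINT x:D|lborel. potential \<alpha> D (x + - h))"
    unfolding potential_translate_integral(2)[OF a D M0 DM h] potential_translate_integral(2)[OF a D M0 DM h']
    using double_integral_shift_symmetric[of D "\<lambda>z. norm z powr (-\<alpha>)" h] D by simp
  moreover have "0 \<le> (LINT x:D|lborel. potential \<alpha> D (x + h))" "0 \<le> (LINT x:D|lborel. potential \<alpha> D (x - h))"
    unfolding set_lebesgue_integral_def
    by (intro Bochner_Integration.integral_nonneg; simp add: potential_nonneg)+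
  ultimately show ?thesis by simp
qed

text \<open>The key cancellation: the gradient of the stream function of a bounded patch integrates
  to zero over the patch (the kernel gradient is odd).\<close>
lemma stream_gradient_integral_zero:
  fixes \<alpha> :: real and D :: "complex set" and v :: complex
  assumes a0: "0 < \<alpha>" and a1: "\<alpha> < 1" and D[measurable]: "D \<in> sets lborel" and bD: "bounded D"
    and diff: "\<And>x. stream \<alpha> D differentiable (at x)"
  shows "(LINT x:D|lborel. frechet_derivative (stream \<alpha> D) (at x) v) = 0"
proof -
  obtain r where r: "0 < r" "D \<subseteq> ball 0 r" using bounded_subset_ballD[OF bD] by blast
  define M where "M = max 1 r"
  have M: "M \<ge> 1" and DM: "D \<subseteq> ball 0 M" using r by (auto simp: M_def)
  obtain L where L: "\<And>x h. x \<in> ball 0 M \<Longrightarrow> norm h \<le> 1 \<Longrightarrow>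
      \<bar>potential \<alpha> D (x + h) - potential \<alpha> D x\<bar> \<le> L * norm h"
    using potential_lipschitz[OF a0 a1 D M DM] by blast
  define c where "c = C_alpha \<alpha> / (2 * pi)"
  have s: "stream \<alpha> D x = c * potential \<alpha> D x" for x unfolding c_def by (rule stream_eq_potential)
  have a: "0 \<le> \<alpha>" "\<alpha> < 2" and M0: "0 < M" using a0 a1 M by auto
  show ?thesis
  proof (rule set_integral_derivative_zero[OF D])
    show "emeasure lborel D < \<infinity>" using bD by (rule emeasure_bounded_finite)
    show "(stream \<alpha> D has_derivative frechet_derivative (stream \<alpha> D) (at x)) (at x)" for x
      using diff frechet_derivative_works by blast
    show "\<bar>stream \<alpha> D (x + h) - stream \<alpha> D x\<bar> \<le> (\<bar>c\<bar> * L) * norm h"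
      if "x \<in> D" "norm h \<le> 1" for x h
      using L[of x h] that DM by (auto simp: s right_diff_distrib[symmetric] abs_mult mult.assoc
          intro!: mult_left_mono)
    show "set_integrable lborel D (\<lambda>x. stream \<alpha> D (x + h))" if "norm h \<le> 1" for h
      unfolding s using potential_translate_integral(1)[OF a D M0 DM] that M
      by (intro set_integrable_mult_right) auto
    show "(LINT x:D|lborel. stream \<alpha> D (x + h)) = (LINT x:D|lborel. stream \<alpha> D (x - h))"
      if "norm h \<le> 1" for h
      unfolding s using potential_translate_symmetric[OF a D M0 DM, of h] that M by simp
  qed
qed

section \<open>Rotations preserve Lebesgue measure on the plane\<close>

text \<open>A rotation of the plane is a product of three shears, and each shear preserves Lebesgue
  measure by Fubini (its vertical slices are translated intervals).\<close>

lemma complex_coords_measurable[measurable]: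
  "(\<lambda>z::complex. (Re z, Im z)) \<in> borel_measurable borel"
  "(\<lambda>(x, y). Complex x y) \<in> borel_measurable (borel :: (real \<times> real) measure)"
proof -
  show "(\<lambda>z::complex. (Re z, Im z)) \<in> borel_measurable borel"
    by (intro borel_measurable_continuous_onI continuous_intros)
  have "(\<lambda>(x, y). Complex x y) = (\<lambda>p::real \<times> real. complex_of_real (fst p) + \<i> * complex_of_real (snd p))"
    by (auto simp: complex_eq_iff)
  then show "(\<lambda>(x, y). Complex x y) \<in> borel_measurable (borel :: (real \<times> real) measure)"
    by (simp only:) (intro borel_measurable_continuous_onI continuous_intros)
qed

lemma shear_swap_measurable[measurable]:
  "(\<lambda>(x::real, y::real). (x, y + b * x)) \<in> borel_measurable borel"
  "(\<lambda>(x::real, y::real). (x + b * y, y)) \<in> borel_measurable borel"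
  "(\<lambda>(x::real, y::real). (y, x)) \<in> borel_measurable borel"
  by (intro borel_measurable_continuous_onI; unfold case_prod_beta; intro continuous_intros)+

lemma distr_lborel_compose:
  assumes [measurable]: "f \<in> borel_measurable borel" "g \<in> borel_measurable borel"
    and "distr lborel borel f = lborel" "distr lborel borel g = lborel"
  shows "distr lborel borel (g \<circ> f) = lborel"
proof -
  have "distr lborel borel (g \<circ> f) = distr (distr lborel borel f) borel g"
    by (subst distr_distr) auto
  then show ?thesis using assms(3,4) by simp
qed

lemma box_pair_eq: "box (la, lb) (ua, ub) = box la ua \<times> box (lb::real) ub" for la ua :: real
  by (auto simp: box_def Basis_prod_def)

lemma lborel_complex_coords: "distr lborel borel (\<lambda>z::complex. (Re z, Im z)) = (lborel :: (real \<times> real) measure)"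
proof (rule lborel_eqI[symmetric])
  fix l u :: "real \<times> real"
  assume lu: "\<And>b. b \<in> Basis \<Longrightarrow> l \<bullet> b \<le> u \<bullet> b"
  obtain la lb ua ub where l: "l = (la, lb)" and u: "u = (ua, ub)" by (cases l, cases u) auto
  have le: "la \<le> ua" "lb \<le> ub" using lu[of "(1,0)"] lu[of "(0,1)"] by (auto simp: l u Basis_prod_def)
  have "(\<lambda>z::complex. (Re z, Im z)) -` box l u = box (Complex la lb) (Complex ua ub)"
    by (auto simp: l u box_pair_eq mem_box Basis_complex_def)
  then have "emeasure (distr lborel borel (\<lambda>z::complex. (Re z, Im z))) (box l u)
      = emeasure lborel (box (Complex la lb) (Complex ua ub))"
    by (subst emeasure_distr) auto
  also have "\<dots> = ennreal ((ua - la) * (ub - lb))"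
    using le by (subst emeasure_lborel_box_eq) (auto simp: Basis_complex_def mult.commute)
  also have "(ua - la) * (ub - lb) = (\<Prod>b\<in>Basis. (u - l) \<bullet> b)"
    by (simp add: l u Basis_prod_def prod.union_disjoint prod.reindex inj_on_def)
  finally show "emeasure (distr lborel borel (\<lambda>z::complex. (Re z, Im z))) (box l u) = ennreal (\<Prod>b\<in>Basis. (u - l) \<bullet> b)" .
qed simp

lemma lborel_complex_of_coords: "distr lborel borel (\<lambda>(x, y). Complex x y) = (lborel :: complex measure)"
proof -
  have "(\<lambda>(x, y). Complex x y) \<circ> (\<lambda>z::complex. (Re z, Im z)) = (\<lambda>z. z)" by (auto simp: o_def)
  then have "distr lborel borel (\<lambda>z::complex. z) = distr (distr lborel borel (\<lambda>z::complex. (Re z, Im z))) borel (\<lambda>(x, y). Complex x y)"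
    by (subst distr_distr) auto
  then show ?thesis by (simp add: lborel_complex_coords distr_id2)
qed

lemma lborel_vertical_shear: "distr lborel borel (\<lambda>(x, y). (x, y + b * x)) = (lborel :: (real \<times> real) measure)"
proof (rule lborel_eqI[symmetric])
  fix l u :: "real \<times> real"
  assume lu: "\<And>c. c \<in> Basis \<Longrightarrow> l \<bullet> c \<le> u \<bullet> c"
  obtain la lb ua ub where l: "l = (la, lb)" and u: "u = (ua, ub)" by (cases l, cases u) auto
  have le: "la \<le> ua" "lb \<le> ub" using lu[of "(1,0)"] lu[of "(0,1)"] by (auto simp: l u Basis_prod_def)
  define A where "A = (\<lambda>(x::real, y::real). (x, y + b * x)) -` box l u"
  have A: "A \<in> sets (lborel \<Otimes>\<^sub>M lborel)"
    unfolding A_def lborel_prod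
    using measurable_sets[OF shear_swap_measurable(1), of "box l u"] by simp
  have slice: "emeasure lborel (Pair x -` A) = ennreal (indicator {la<..<ua} x * (ub - lb))" for x
  proof (cases "la < x \<and> x < ua")
    case True
    then have "Pair x -` A = {lb - b * x <..< ub - b * x}" by (auto simp: A_def l u box_pair_eq)
    then show ?thesis using True le by simp
  next
    case False
    then have "Pair x -` A = {}" by (auto simp: A_def l u box_pair_eq)
    then show ?thesis using False by simp
  qed
  have "emeasure (distr lborel borel (\<lambda>(x, y). (x, y + b * x))) (box l u) = emeasure (lborel \<Otimes>\<^sub>M lborel) A"
    unfolding A_def by (subst emeasure_distr) (auto simp: lborel_prod)
  also have "\<dots> = (\<integral>\<^sup>+x. emeasure lborel (Pair x -` A) \<partial>lborel)"
    by (rule lborel.emeasure_pair_measure_alt[OF A])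
  also have "\<dots> = (\<integral>\<^sup>+x. ennreal (ub - lb) * indicator {la<..<ua} x \<partial>lborel)"
    using le by (intro nn_integral_cong) (simp add: slice ennreal_mult' mult.commute split: split_indicator)
  also have "\<dots> = ennreal (ub - lb) * ennreal (ua - la)"
    using le by (subst nn_integral_cmult_indicator) auto
  also have "\<dots> = ennreal (\<Prod>c\<in>Basis. (u - l) \<bullet> c)"
    using le by (simp add: l u Basis_prod_def prod.union_disjoint prod.reindex inj_on_def ennreal_mult' mult.commute)
  finally show "emeasure (distr lborel borel (\<lambda>(x, y). (x, y + b * x))) (box l u) = ennreal (\<Prod>c\<in>Basis. (u - l) \<bullet> c)" .
qed simp

lemma lborel_swap: "distr lborel borel (\<lambda>(x, y). (y, x)) = (lborel :: (real \<times> real) measure)"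
proof -
  have "(lborel :: (real \<times> real) measure) = distr (lborel \<Otimes>\<^sub>M lborel) (lborel \<Otimes>\<^sub>M lborel) (\<lambda>(x, y). (y, x))"
    by (subst lborel_pair.distr_pair_swap[symmetric]) (simp add: lborel_prod)
  also have "\<dots> = distr lborel borel (\<lambda>(x, y). (y, x))"
    by (simp add: lborel_prod) (rule distr_cong, auto)
  finally show ?thesis ..
qed

lemma lborel_horizontal_shear: "distr lborel borel (\<lambda>(x, y). (x + t * y, y)) = (lborel :: (real \<times> real) measure)"
proof -
  have "(\<lambda>(x, y). (x + t * y, y)) = (\<lambda>(x::real, y::real). (y, x)) \<circ> ((\<lambda>(x, y). (x, y + t * x)) \<circ> (\<lambda>(x::real, y::real). (y, x)))"
    by (auto simp: o_def)
  then show ?thesis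
    by (simp only:) (intro distr_lborel_compose lborel_swap lborel_vertical_shear; measurable)
qed

text \<open>Multiplication by a unit complex number \<open>a + ib \<noteq> -1\<close> is the composition of the shears
  \<open>(x, y) \<mapsto> (x + t y, y)\<close>, \<open>(x, y) \<mapsto> (x, y + b x)\<close>, \<open>(x, y) \<mapsto> (x + t y, y)\<close> with \<open>t = -b/(1+a)\<close>.\<close>
lemma lborel_mult_unit:
  fixes u :: complex assumes u: "norm u = 1"
  shows "distr lborel borel (\<lambda>z. u * z) = lborel"
proof (cases "u = -1")
  case True
  have "lborel = density (distr lborel borel (\<lambda>x::complex. 0 + (-1::real) *\<^sub>R x)) (\<lambda>_. \<bar>-1::real\<bar>^DIM(complex))"
    by (rule lborel_affine) simp
  then show ?thesis using True by (simp add: density_1)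
next
  case False
  define a b where "a = Re u" and "b = Im u"
  have ab: "a\<^sup>2 + b\<^sup>2 = 1" using u by (simp add: a_def b_def cmod_def)
  have a1: "1 + a \<noteq> 0"
  proof
    assume "1 + a = 0"
    then have "a = -1" by simp
    moreover from this have "b = 0" using ab by simp
    ultimately show False using False by (simp add: a_def b_def complex_eq_iff)
  qed
  define t where "t = - b / (1 + a)"
  have tb: "1 + t * b = a" unfolding t_def using a1 ab by (simp add: field_simps power2_eq_square)
  have "2 + t * b = 1 + a" using tb by simp
  moreover have "t * (1 + a) = - b" using a1 by (simp add: t_def)
  ultimately have tt: "t * (2 + t * b) = - b" by (simp only:)
  define H where "H = (\<lambda>(x::real, y::real). (x + t * y, y))"
  define V where "V = (\<lambda>(x::real, y::real). (x, y + b * x))"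
  have "u * z = Complex (Re z + t * Im z + t * (Im z + b * (Re z + t * Im z))) (Im z + b * (Re z + t * Im z))" for z
  proof -
    have "Re z + t * Im z + t * (Im z + b * (Re z + t * Im z)) = Re z * (1 + t * b) + Im z * (t * (2 + t * b))"
      "Im z + b * (Re z + t * Im z) = b * Re z + Im z * (1 + t * b)"
      by (simp_all add: algebra_simps)
    then show ?thesis unfolding tb tt by (simp add: a_def b_def complex_eq_iff)
  qed
  then have eq: "(\<lambda>z. u * z) = (\<lambda>(x, y). Complex x y) \<circ> (H \<circ> (V \<circ> (H \<circ> (\<lambda>z::complex. (Re z, Im z)))))"
    by (simp add: H_def V_def fun_eq_iff)
  have [measurable]: "H \<in> borel_measurable borel" "V \<in> borel_measurable borel"
    unfolding H_def V_def by measurable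
  have "distr lborel borel H = lborel" "distr lborel borel V = lborel"
    unfolding H_def V_def by (rule lborel_horizontal_shear lborel_vertical_shear)+
  then show ?thesis unfolding eq
    by (intro distr_lborel_compose lborel_complex_coords lborel_complex_of_coords; measurable)
qed

lemma rot_measurable[measurable]: "rot x0 \<phi> \<in> borel_measurable borel"
  unfolding rot_def[abs_def] by (intro borel_measurable_continuous_onI continuous_intros)

lemma lborel_rot: "distr lborel borel (rot x0 \<phi>) = lborel"
proof -
  have "rot x0 \<phi> = (+) (x0 - cis \<phi> * x0) \<circ> (\<lambda>z. cis \<phi> * z)"
    by (auto simp: rot_def algebra_simps)
  then show ?thesis
    by (simp only:) (intro distr_lborel_compose lborel_mult_unit lborel_distr_plus; simp)
qed

lemma set_integral_rot:
  fixes f :: "complex \<Rightarrow> 'b::{banach, second_countable_topology}"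
  assumes A: "A \<in> sets lborel" and f[measurable]: "f \<in> borel_measurable borel"
  shows "(LINT x:(rot x0 \<phi> ` A)|lborel. f x) = (LINT x:A|lborel. f (rot x0 \<phi> x))"
proof -
  have inv: "rot x0 (-\<phi>) (rot x0 \<phi> z) = z" "rot x0 \<phi> (rot x0 (-\<phi>) z) = z" for z
    by (simp_all add: rot_def mult.assoc[symmetric] cis_mult)
  then have img: "rot x0 \<phi> ` A = rot x0 (-\<phi>) -` A" by (auto simp: image_iff) metis
  have [measurable]: "rot x0 \<phi> ` A \<in> sets borel"
    unfolding img using measurable_sets[OF rot_measurable, of A] A by simp
  have "(LINT x:(rot x0 \<phi> ` A)|lborel. f x)
      = integral\<^sup>L (distr lborel borel (rot x0 \<phi>)) (\<lambda>x. indicator (rot x0 \<phi> ` A) x *\<^sub>R f x)"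
    unfolding set_lebesgue_integral_def by (simp add: lborel_rot)
  also have "\<dots> = (LINT x|lborel. indicator (rot x0 \<phi> ` A) (rot x0 \<phi> x) *\<^sub>R f (rot x0 \<phi> x))"
    by (rule integral_distr) auto
  also have "\<dots> = (LINT x:A|lborel. f (rot x0 \<phi> x))"
    unfolding set_lebesgue_integral_def using inv(1)
    by (intro Bochner_Integration.integral_cong refl) (metis image_eqI indicator_simps inj_image_mem_iff inj_on_inverseI)
  finally show ?thesis .
qed

section \<open>Test functions that are linear on a disc\<close>

text \<open>\<open>ramp t = (max 0 t)\<^sup>2\<close> is \<open>C\<^sup>1\<close>; the quotient \<open>cutoff a\<close> built from it is a \<open>C\<^sup>1\<close> function
  that equals \<open>1\<close> on \<open>(-\<infinity>, a)\<close> and \<open>0\<close> on \<open>[a + 1, \<infinity>)\<close>.\<close>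
definition ramp :: "real \<Rightarrow> real" where "ramp t = (max 0 t)^2"
definition ramp' :: "real \<Rightarrow> real" where "ramp' t = 2 * max 0 t"

lemma ramp_has_derivative: "(ramp has_real_derivative ramp' t) (at t)"
proof -
  consider "t > 0" | "t < 0" | "t = 0" by linarith
  then show ?thesis
  proof cases
    case 1
    have "((\<lambda>t. t^2) has_real_derivative ramp' t) (at t)"
      using 1 by (auto intro!: derivative_eq_intros simp: ramp'_def)
    then show ?thesis
      by (rule has_field_derivative_transform_within_open[where S="{0<..}"]) (use 1 in \<open>auto simp: ramp_def ramp'_def\<close>)
  next
    case 2
    have "((\<lambda>t. 0) has_real_derivative ramp' t) (at t)" using 2 by (simp add: ramp'_def)
    then show ?thesis
      by (rule has_field_derivative_transform_within_open[where S="{..<0}"]) (use 2 in \<open>auto simp: ramp_def ramp'_def\<close>)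
  next
    case 3
    have "((\<lambda>h. (ramp (0 + h) - ramp 0) / h) \<longlongrightarrow> 0) (at 0)"
    proof (rule Lim_null_comparison[where g = "\<lambda>h. \<bar>h\<bar>"])
      show "\<forall>\<^sub>F h in at 0. norm ((ramp (0 + h) - ramp 0) / h) \<le> \<bar>h\<bar>"
      proof (rule always_eventually, rule allI)
        fix h :: real
        show "norm ((ramp (0 + h) - ramp 0) / h) \<le> \<bar>h\<bar>"
          by (cases "h > 0") (auto simp: ramp_def power2_eq_square abs_mult max_def)
      qed
      show "((\<lambda>h. \<bar>h\<bar>) \<longlongrightarrow> 0) (at (0::real))"
        using tendsto_rabs[OF tendsto_ident_at[of "0::real" UNIV]] by simp
    qed
    then show ?thesis using 3 by (simp add: DERIV_def ramp'_def)
  qed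
qed

lemma ramp_continuous: "continuous_on UNIV ramp" "continuous_on UNIV ramp'"
  unfolding ramp_def ramp'_def by (intro continuous_intros)+

lemma ramp_nonneg: "ramp t \<ge> 0" by (simp add: ramp_def)
lemma ramp_pos: "t > 0 \<Longrightarrow> ramp t > 0" by (simp add: ramp_def)
lemma ramp_zero: "t \<le> 0 \<Longrightarrow> ramp t = 0" "t \<le> 0 \<Longrightarrow> ramp' t = 0" by (simp_all add: ramp_def ramp'_def)

definition cutoff :: "real \<Rightarrow> real \<Rightarrow> real" where
  "cutoff a r = ramp (a + 1 - r) / (ramp (a + 1 - r) + ramp (r - a))"
definition cutoff' :: "real \<Rightarrow> real \<Rightarrow> real" where
  "cutoff' a r = ((- ramp' (a + 1 - r)) * ramp (r - a) - ramp (a + 1 - r) * ramp' (r - a)) / (ramp (a + 1 - r) + ramp (r - a))^2"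

lemma cutoff_denominator_pos: "ramp (a + 1 - r) + ramp (r - a) > 0"
proof (cases "r \<le> a")
  case True then have "ramp (a + 1 - r) > 0" by (intro ramp_pos) simp
  then show ?thesis using ramp_nonneg[of "r - a"] by simp
next
  case False then have "ramp (r - a) > 0" by (intro ramp_pos) simp
  then show ?thesis using ramp_nonneg[of "a + 1 - r"] by simp
qed

lemma cutoff_has_derivative: "(cutoff a has_real_derivative cutoff' a r) (at r)"
proof -
  have d1: "((\<lambda>r. ramp (a + 1 - r)) has_real_derivative ramp' (a + 1 - r) * (-1)) (at r)"
    using DERIV_chain2[OF ramp_has_derivative, of "\<lambda>r. a + 1 - r" "-1" r]
    by (simp add: DERIV_diff[OF DERIV_const DERIV_ident, of "a+1", simplified])
  have d2: "((\<lambda>r. ramp (r - a)) has_real_derivative ramp' (r - a) * 1) (at r)"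
    using DERIV_chain2[OF ramp_has_derivative, of "\<lambda>r. r - a" 1 r]
    by (simp add: DERIV_diff[OF DERIV_ident DERIV_const, simplified])
  have "((\<lambda>r. ramp (a + 1 - r) / (ramp (a + 1 - r) + ramp (r - a))) has_real_derivative
     ((ramp' (a + 1 - r) * (-1)) * (ramp (a + 1 - r) + ramp (r - a)) - ramp (a + 1 - r) * (ramp' (a + 1 - r) * (-1) + ramp' (r - a) * 1))
       / ((ramp (a + 1 - r) + ramp (r - a)) * (ramp (a + 1 - r) + ramp (r - a)))) (at r)"
    using cutoff_denominator_pos[of a r] by (intro DERIV_divide d1 d2 DERIV_add) auto
  moreover have "((ramp' (a + 1 - r) * (-1)) * (ramp (a + 1 - r) + ramp (r - a)) - ramp (a + 1 - r) * (ramp' (a + 1 - r) * (-1) + ramp' (r - a) * 1))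
       / ((ramp (a + 1 - r) + ramp (r - a)) * (ramp (a + 1 - r) + ramp (r - a))) = cutoff' a r"
    unfolding cutoff'_def by (simp add: power2_eq_square algebra_simps)
  ultimately show ?thesis unfolding cutoff_def[abs_def] by simp
qed

lemma cutoff_continuous: "continuous_on UNIV (cutoff a)" "continuous_on UNIV (cutoff' a)"
proof -
  have c1: "continuous_on UNIV (\<lambda>r. ramp (a + 1 - r))" "continuous_on UNIV (\<lambda>r. ramp (r - a))"
    "continuous_on UNIV (\<lambda>r. ramp' (a + 1 - r))" "continuous_on UNIV (\<lambda>r. ramp' (r - a))"
    by (rule continuous_on_compose2[OF ramp_continuous(1)] continuous_on_compose2[OF ramp_continuous(2)];
        (intro continuous_intros)?; simp)+
  show "continuous_on UNIV (cutoff a)" unfolding cutoff_def[abs_def]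
    using cutoff_denominator_pos[of a] by (intro continuous_intros c1) (auto simp: less_imp_neq[symmetric] dest: sym)
  show "continuous_on UNIV (cutoff' a)" unfolding cutoff'_def[abs_def]
    using cutoff_denominator_pos[of a] by (intro continuous_intros c1) (auto simp: less_imp_neq[symmetric] dest: sym)
qed

lemma cutoff_below: "r < a \<Longrightarrow> cutoff a r = 1" "r < a \<Longrightarrow> cutoff' a r = 0"
proof -
  assume r: "r < a"
  have z: "ramp (r - a) = 0" "ramp' (r - a) = 0" using r by (simp_all add: ramp_zero)
  have p: "ramp (a + 1 - r) > 0" using r by (intro ramp_pos) simp
  show "cutoff a r = 1" unfolding cutoff_def using z p by simp
  show "cutoff' a r = 0" unfolding cutoff'_def using z by simp
qed

lemma cutoff_above: "r \<ge> a + 1 \<Longrightarrow> cutoff a r = 0"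
  unfolding cutoff_def by (simp add: ramp_zero)

text \<open>The compactly supported test function \<open>x \<mapsto> (w \<bullet> x) cutoff a |x|\<^sup>2\<close>: it coincides with the
  linear function \<open>w \<bullet> x\<close> on the disc \<open>|x|\<^sup>2 < a\<close>, where its gradient is \<open>w\<close>.\<close>
definition cutoff_linear :: "real \<Rightarrow> complex \<Rightarrow> complex \<Rightarrow> real" where
  "cutoff_linear a w x = (w \<bullet> x) * cutoff a (x \<bullet> x)"

definition cutoff_linear_deriv :: "real \<Rightarrow> complex \<Rightarrow> complex \<Rightarrow> complex \<Rightarrow> real" where
  "cutoff_linear_deriv a w x v = (w \<bullet> x) * (cutoff' a (x \<bullet> x) * (x \<bullet> v + v \<bullet> x)) + (w \<bullet> v) * cutoff a (x \<bullet> x)"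

lemma cutoff_linear_has_derivative: "(cutoff_linear a w has_derivative cutoff_linear_deriv a w x) (at x)"
proof -
  have c1: "((\<lambda>x. x \<bullet> x) has_derivative (\<lambda>v. x \<bullet> v + v \<bullet> x)) (at x)"
    by (rule has_derivative_inner[OF has_derivative_ident has_derivative_ident])
  have c2: "(cutoff a has_derivative (\<lambda>h. cutoff' a (x \<bullet> x) * h)) (at (x \<bullet> x))"
    using cutoff_has_derivative[of a "x \<bullet> x"] unfolding has_field_derivative_def by simp
  have c3: "((\<lambda>x. cutoff a (x \<bullet> x)) has_derivative (\<lambda>v. cutoff' a (x \<bullet> x) * (x \<bullet> v + v \<bullet> x))) (at x)"
    using has_derivative_compose[OF c1 c2] by simp
  have c4: "((\<lambda>x. w \<bullet> x) has_derivative (\<lambda>v. w \<bullet> v)) (at x)"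
    by (rule has_derivative_inner_right[OF has_derivative_ident])
  show ?thesis unfolding cutoff_linear_def[abs_def] cutoff_linear_deriv_def[abs_def]
    using has_derivative_mult[OF c4 c3] by simp
qed

lemma frechet_cutoff_linear: "frechet_derivative (cutoff_linear a w) (at x) = cutoff_linear_deriv a w x"
  using cutoff_linear_has_derivative frechet_derivative_at by metis

lemma test_fun_cutoff_linear: "test_fun (cutoff_linear a w)"
  unfolding test_fun_def
proof (intro conjI allI)
  show "cutoff_linear a w differentiable_on UNIV"
    using cutoff_linear_has_derivative unfolding differentiable_on_def differentiable_def by blast
  fix v :: complex
  have cc: "continuous_on UNIV (\<lambda>x::complex. cutoff a (x \<bullet> x))" "continuous_on UNIV (\<lambda>x::complex. cutoff' a (x \<bullet> x))"
    by (rule continuous_on_compose2[OF cutoff_continuous(1)] continuous_on_compose2[OF cutoff_continuous(2)];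
        (intro continuous_intros)?; simp)+
  show "continuous_on UNIV (\<lambda>x. frechet_derivative (cutoff_linear a w) (at x) v)"
    unfolding frechet_cutoff_linear cutoff_linear_deriv_def by (intro continuous_intros cc)
  have "{x. cutoff_linear a w x \<noteq> 0} \<subseteq> cball 0 (sqrt (a + 1))"
  proof
    fix x assume "x \<in> {x. cutoff_linear a w x \<noteq> 0}"
    then have "cutoff a (x \<bullet> x) \<noteq> 0" by (simp add: cutoff_linear_def)
    then have "x \<bullet> x < a + 1" using cutoff_above[of a "x \<bullet> x"] by linarith
    then have "norm x ^ 2 \<le> a + 1" by (simp add: power2_norm_eq_inner)
    then show "x \<in> cball 0 (sqrt (a + 1))" by (simp add: real_le_rsqrt)
  qed
  then show "bounded {x. cutoff_linear a w x \<noteq> 0}" by (rule bounded_subset[OF bounded_cball])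
qed

lemma cutoff_linear_inside:
  assumes "norm x ^ 2 < a"
  shows "cutoff_linear a w x = w \<bullet> x" and "grad (cutoff_linear a w) x = w"
proof -
  have xx: "x \<bullet> x < a" using assms by (simp add: power2_norm_eq_inner)
  show "cutoff_linear a w x = w \<bullet> x" using cutoff_below(1)[OF xx] by (simp add: cutoff_linear_def)
  have "cutoff_linear_deriv a w x = (\<lambda>v. w \<bullet> v)" using cutoff_below[OF xx] by (simp add: cutoff_linear_deriv_def[abs_def])
  then show "grad (cutoff_linear a w) x = w"
    unfolding grad_def frechet_cutoff_linear by (simp add: inner_complex_def complex_eq_iff)
qed


section \<open>Conservation of the first moment of a patch\<close>

lemma velocity_inner:
  assumes d: "stream \<alpha> D differentiable (at x)"
  shows "velocity \<alpha> D x \<bullet> w = frechet_derivative (stream \<alpha> D) (at x) (\<i> * w)"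
proof -
  define f' where "f' = frechet_derivative (stream \<alpha> D) (at x)"
  have l: "linear f'" unfolding f'_def using d frechet_derivative_works has_derivative_linear by blast
  have iw: "\<i> * w = (- Im w) *\<^sub>R 1 + Re w *\<^sub>R \<i>" by (simp add: complex_eq_iff)
  have "f' (\<i> * w) = (- Im w) *\<^sub>R f' 1 + Re w *\<^sub>R f' \<i>"
    unfolding iw by (simp only: linear_add[OF l] linear_scale[OF l])
  then have "f' (\<i> * w) = - Im w * f' 1 + Re w * f' \<i>" by simp
  moreover have "velocity \<alpha> D x \<bullet> w = Re w * f' \<i> - Im w * f' 1"
    unfolding velocity_def grad_def f'_def[symmetric] by (simp add: inner_complex_def)
  ultimately show ?thesis unfolding f'_def by simp
qed

lemma set_integrable_ident_bounded:
  assumes "D \<in> sets lborel" "bounded (D :: complex set)"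
  shows "set_integrable lborel D (\<lambda>x. x)"
proof -
  obtain B where "\<And>x. x \<in> D \<Longrightarrow> norm x \<le> B" using assms(2) bounded_iff by blast
  then show ?thesis
    unfolding set_integrable_def using assms emeasure_bounded_finite[OF assms(2)]
    by (intro integrableI_bounded_set_indicator[where B = B]) auto
qed

lemma set_integral_inner_ident:
  assumes "D \<in> sets lborel" "bounded (D :: complex set)"
  shows "(LINT x:D|lborel. w \<bullet> x) = w \<bullet> (LINT x:D|lborel. x)"
proof -
  have "(\<lambda>x. indicator D x *\<^sub>R (w \<bullet> x)) = (\<lambda>x. w \<bullet> (indicator D x *\<^sub>R x))"
    by simp
  then show ?thesis
    unfolding set_lebesgue_integral_def
    using set_integrable_ident_bounded[OF assms] unfolding set_integrable_def
    by (simp only:) (rule integral_inner_right)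
qed

text \<open>For a patch solution staying in a fixed disc, every linear moment \<open>\<integral>\<^sub>D\<^sub>t w \<bullet> x dx\<close> is
  conserved: testing with a function equal to \<open>w \<bullet> x\<close> on the disc, its time derivative is
  \<open>\<integral>\<^sub>D\<^sub>t u \<cdot> w\<close>, which vanishes by the cancellation lemma for the stream function.\<close>
lemma patch_linear_moment_conserved:
  fixes \<alpha> \<rho> :: real and D :: "real \<Rightarrow> complex set"
  assumes a0: "0 < \<alpha>" and a1: "\<alpha> < 1" and sol: "gsqg_patch_solution \<alpha> D D0"
    and disc: "\<And>t. t \<ge> 0 \<Longrightarrow> D t \<subseteq> ball 0 \<rho>" and t: "t \<ge> 0"
  shows "(LINT x:D t|lborel. w \<bullet> x) = (LINT x:D 0|lborel. w \<bullet> x)"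
proof -
  have Dt: "D s \<in> sets lborel" "bounded (D s)" "\<And>x. stream \<alpha> (D s) differentiable (at x)" if "s \<ge> 0" for s
    using sol that unfolding gsqg_patch_solution_def by auto
  have weak: "((\<lambda>s. LINT x:D s|lborel. \<psi> x) has_real_derivative
        (LINT x:D s|lborel. velocity \<alpha> (D s) x \<bullet> grad \<psi> x)) (at s within {0..})"
    if "test_fun \<psi>" "s \<ge> 0" for \<psi> s
    using sol that unfolding gsqg_patch_solution_def by auto
  define a where "a = \<rho>\<^sup>2"
  have in_disc: "norm x ^ 2 < a" if "s \<ge> 0" "x \<in> D s" for s x
    using disc[OF that(1)] that(2) unfolding a_def by (intro power_strict_mono) auto
  have test: "(LINT x:D s|lborel. cutoff_linear a w x) = (LINT x:D s|lborel. w \<bullet> x)" if "s \<ge> 0" for s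
    using in_disc[OF that] by (intro set_lebesgue_integral_cong Dt(1)[OF that]) (auto simp: cutoff_linear_inside)
  have "\<exists>c. \<forall>s\<in>{0..}. (LINT x:D s|lborel. cutoff_linear a w x) = c"
  proof (rule has_field_derivative_zero_constant)
    fix s :: real assume s: "s \<in> {0..}"
    have "(LINT x:D s|lborel. velocity \<alpha> (D s) x \<bullet> grad (cutoff_linear a w) x) =
          (LINT x:D s|lborel. frechet_derivative (stream \<alpha> (D s)) (at x) (\<i> * w))"
      using in_disc s Dt[of s] by (intro set_lebesgue_integral_cong) (auto simp: cutoff_linear_inside velocity_inner)
    also have "\<dots> = 0"
      using s by (intro stream_gradient_integral_zero[OF a0 a1 Dt]) auto
    finally have "(LINT x:D s|lborel. velocity \<alpha> (D s) x \<bullet> grad (cutoff_linear a w) x) = 0" .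
    then show "((\<lambda>s. LINT x:D s|lborel. cutoff_linear a w x) has_real_derivative 0) (at s within {0..})"
      using weak[OF test_fun_cutoff_linear[of a w], of s] s by simp
  qed simp
  then have "(LINT x:D t|lborel. cutoff_linear a w x) = (LINT x:D 0|lborel. cutoff_linear a w x)"
    using t by auto
  then show ?thesis using test[OF t] test[of 0] by simp
qed

lemma patch_first_moment_conserved:
  fixes \<alpha> \<rho> :: real and D :: "real \<Rightarrow> complex set"
  assumes a0: "0 < \<alpha>" and a1: "\<alpha> < 1" and sol: "gsqg_patch_solution \<alpha> D D0"
    and disc: "\<And>t. t \<ge> 0 \<Longrightarrow> D t \<subseteq> ball 0 \<rho>" and t: "t \<ge> 0"
  shows "(LINT x:D t|lborel. x) = (LINT x:D0|lborel. x)"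
proof -
  have Dt: "D s \<in> sets lborel" "bounded (D s)" if "s \<ge> 0" for s
    using sol that unfolding gsqg_patch_solution_def by auto
  define V where "V s = (LINT x:D s|lborel. x)" for s
  have "w \<bullet> V t = w \<bullet> V 0" for w
    using patch_linear_moment_conserved[OF a0 a1 sol disc t, of w]
    unfolding V_def set_integral_inner_ident[OF Dt[OF t]] set_integral_inner_ident[OF Dt[OF order_refl]] by simp
  from this[of "V t - V 0"] have "(V t - V 0) \<bullet> (V t - V 0) = 0" by (simp add: inner_diff_right)
  then have "V t = V 0" by simp
  moreover have "D 0 = D0" using sol unfolding gsqg_patch_solution_def by simp
  ultimately show ?thesis by (simp add: V_def)
qed
section \<open>Rotating patches\<close>

lemma first_moment_rot:
  fixes D :: "complex set" and x0 :: complex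
  assumes D: "D \<in> sets lborel" and bD: "bounded D"
  shows "(LINT x:(rot x0 \<theta> ` D)|lborel. x)
      = measure lborel D * x0 + cis \<theta> * ((LINT x:D|lborel. x) - measure lborel D * x0)"
proof -
  have fin: "emeasure lborel D < \<infinity>" by (rule emeasure_bounded_finite[OF bD])
  have "(LINT x:(rot x0 \<theta> ` D)|lborel. x) = (LINT x:D|lborel. rot x0 \<theta> x)"
    by (rule set_integral_rot[OF D]) simp
  also have "\<dots> = (LINT x:D|lborel. (x0 - cis \<theta> * x0) + cis \<theta> * x)"
    by (simp add: rot_def algebra_simps)
  also have "\<dots> = (LINT x:D|lborel. x0 - cis \<theta> * x0) + (LINT x:D|lborel. cis \<theta> * x)"
    using set_integrable_ident_bounded[OF D bD] fin D
    by (intro set_integral_add(2) set_integrable_mult_right)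
       (auto simp: set_integrable_def)
  also have "(LINT x:D|lborel. x0 - cis \<theta> * x0) = measure lborel D *\<^sub>R (x0 - cis \<theta> * x0)"
    using fin D by (intro set_integral_const) auto
  finally show ?thesis by (simp add: scaleR_conv_of_real algebra_simps)
qed

lemma smooth_fun_continuous: "smooth_fun f \<Longrightarrow> continuous_on UNIV f"
  unfolding smooth_fun_def
  by (metis continuous_at_imp_continuous_on has_vector_derivative_continuous)

text \<open>A continuous angle whose rotations are all trivial is constant, since the angles
  with \<open>cis \<theta> = 1\<close> are a discrete set.\<close>
lemma angle_constant_if_cis_one:
  fixes \<phi> :: "real \<Rightarrow> real"
  assumes "connected S" "continuous_on S \<phi>" and one: "\<And>t. t \<in> S \<Longrightarrow> cis (\<phi> t) = 1"
  shows "\<phi> constant_on S"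
proof (rule continuous_discrete_range_constant[OF assms(1,2)])
  have multiple: "\<exists>n::int. \<phi> s = n * (2 * pi)" if "s \<in> S" for s
  proof -
    have "cos (\<phi> s) = 1" using one[OF that] by (simp add: complex_eq_iff)
    then show ?thesis unfolding cos_one_2pi_int by (simp add: mult.assoc)
  qed
  have "2 * pi \<le> norm (\<phi> s - \<phi> t)" if st: "s \<in> S" "t \<in> S" and ne: "\<phi> s \<noteq> \<phi> t" for s t
  proof -
    obtain n m :: int where nm: "\<phi> s = n * (2 * pi)" "\<phi> t = m * (2 * pi)"
      using multiple[OF st(1)] multiple[OF st(2)] by blast
    then have "n \<noteq> m" using ne by auto
    then have "1 \<le> \<bar>real_of_int n - real_of_int m\<bar>" by linarith
    then have "1 * (2 * pi) \<le> \<bar>real_of_int n - real_of_int m\<bar> * (2 * pi)"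
      by (intro mult_right_mono) auto
    also have "\<dots> = norm (\<phi> s - \<phi> t)" by (simp add: nm left_diff_distrib[symmetric] abs_mult)
    finally show ?thesis by simp
  qed
  then show "\<exists>e>0. \<forall>s. s \<in> S \<and> \<phi> s \<noteq> \<phi> t \<longrightarrow> e \<le> norm (\<phi> s - \<phi> t)" if "t \<in> S" for t
    using that by (intro exI[of _ "2 * pi"]) auto
qed

lemma measure_pos_open:
  assumes "open D" "D \<noteq> {}" "bounded (D :: complex set)"
  shows "0 < measure lborel D"
proof -
  obtain z e where e: "e > 0" "cball z e \<subseteq> D"
    using assms(1,2) open_contains_cball by blast
  have "0 < ennreal (pi * e\<^sup>2)" using e(1) by simp
  also have "\<dots> = emeasure lborel (cball z e)" using e(1) by (simp add: emeasure_cball_complex)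
  also have "\<dots> \<le> emeasure lborel D" using e(2) assms(1) by (intro emeasure_mono) auto
  also have "\<dots> = ennreal (measure lborel D)"
    using emeasure_bounded_finite[OF assms(3)] by (intro emeasure_eq_ennreal_measure) simp
  finally show ?thesis by simp
qed

lemma rot_image_subset_ball:
  assumes "D \<subseteq> ball 0 r"
  shows "rot x0 \<theta> ` D \<subseteq> ball 0 (2 * norm x0 + r)"
proof
  fix y assume "y \<in> rot x0 \<theta> ` D"
  then obtain z where z: "z \<in> D" "y = rot x0 \<theta> z" by blast
  have "norm y \<le> norm x0 + norm (z - x0)"
    using norm_triangle_ineq[of x0 "cis \<theta> * (z - x0)"] by (simp add: z rot_def norm_mult)
  also have "\<dots> \<le> 2 * norm x0 + norm z" using norm_triangle_ineq4[of z x0] by simp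
  finally show "y \<in> ball 0 (2 * norm x0 + r)" using z assms by auto
qed

theorem corollary3p4:
  fixes \<alpha> :: real and D0 :: "complex set" and x0 :: complex
  assumes "0 < \<alpha>" and "\<alpha> < 1"
    and "rotating_patch \<alpha> D0 x0"
  shows "x0 = (LINT x:D0|lborel. x) / complex_of_real (measure lborel D0)"
proof -
  from assms(3) obtain \<phi> where D0: "open D0" "bounded D0" "D0 \<noteq> {}" and s\<phi>: "smooth_fun \<phi>"
    and nonconst: "\<exists>t1\<ge>0. \<exists>t2\<ge>0. \<phi> t1 \<noteq> \<phi> t2"
    and sol: "gsqg_patch_solution \<alpha> (\<lambda>t. rot x0 (\<phi> t) ` D0) D0"
    unfolding rotating_patch_def by blast
  define m \<mu> where "m = (LINT x:D0|lborel. x)" and "\<mu> = measure lborel D0"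
  obtain r where "D0 \<subseteq> ball 0 r" using bounded_subset_ballD[OF D0(2)] by blast
  then have disc: "rot x0 (\<phi> t) ` D0 \<subseteq> ball 0 (2 * norm x0 + r)" for t
    by (rule rot_image_subset_ball)
  have moment: "(cis (\<phi> t) - 1) * (m - \<mu> * x0) = 0" if "t \<ge> 0" for t
    using patch_first_moment_conserved[OF assms(1,2) sol disc that]
      first_moment_rot[of D0 x0 "\<phi> t"] D0 by (simp add: m_def \<mu>_def algebra_simps)
  have "\<not> \<phi> constant_on {0..}" using nonconst unfolding constant_on_def by (metis atLeast_iff)
  then obtain t where t: "t \<ge> 0" "cis (\<phi> t) \<noteq> 1"
    using angle_constant_if_cis_one[of "{0..}" \<phi>] smooth_fun_continuous[OF s\<phi>]
    by (auto intro: continuous_on_subset)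
  then have "m = \<mu> * x0" using moment[OF t(1)] by simp
  then show ?thesis using measure_pos_open[OF D0(1,3,2)] by (simp add: m_def \<mu>_def)
qed

end
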